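(* Let $\mathcal U$ and $\mathcal V$ be universal Martin-Löf tests. Then $\mathsf{RD}_{\mathcal V}\not\le_{\mathrm{sW}}\mathsf{LAY}_{\mathcal U}$.
   Context: Cantor space $2^\omega$, Lebesgue measure $\lambda$. A Martin-Löf (ML) test is a sequence $(\mathcal V_i)_{i\in\omega}$ of open subsets of $2^\omega$ such that $\{\langle i,\sigma\rangle:[\sigma]\subseteq\mathcal V_i\}$ is c.e. and $\lambda(\mathcal V_i)\le 2^{-i}$; it is universal if $\bigcap_i\mathcal V'_i\subseteq\bigcap_i\mathcal V_i$ for every ML-test $\mathcal V'$. $\mathrm{MLR}$ is the set of Martin-Löf random sequences ($=2^\omega\setminus\bigcap_i\mathcal U_i$ for any universal $\mathcal U$); for $X\in\mathrm{MLR}$, $\mathrm{rd}_{\mathcal U}(X)=\min\{i:X\notin\mathcal U_i\}$. A representation of a set $X$ is a surjective partial map $\delta_X:\subseteq\omega^\omega\to X$. A realizer of a multi-valued partial function $f:\subseteq X\rightrightarrows Y$ is a partial $\Gamma:\subseteq\omega^\omega\to\omega^\omega$ with $\delta_Y(\Gamma(p))\in f(\delta_X(p))$ for all $p\in\mathrm{dom}(f\circ\delta_X)$. $f\le_{\mathrm{sW}} g$ if there are Turing functionals $\Phi,\Psi$ such that $\Psi\circ\Gamma\circ\Phi$ realizes $f$ for every realizer $\Gamma$ of $g$. $\mathrm{MLR}$ is represented by the identity on $\mathrm{MLR}\subseteq\omega^\omega$, $\omega$ by $\chi_{\{n\}}\mapsto n$. $\mathsf{LAY}_{\mathcal U}\colon\mathrm{MLR}\rightrightarrows\omega$,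 $\mathsf{LAY}_{\mathcal U}(X)=\{i:X\notin\mathcal U_i\}$; $\mathsf{RD}_{\mathcal V}\colon\mathrm{MLR}\to\omega$, $\mathsf{RD}_{\mathcal V}(X)=\mathrm{rd}_{\mathcal V}(X)$. *)

theory Defs
  imports "HOL-Probability.Probability" "HOL-Library.Nat_Bijection"
begin

datatype recf = Zero | Succ | Proj nat | Orc | Comp recf "recf list"
  | PrimRec recf recf | Mu recf

inductive ev :: "(nat \<Rightarrow> nat) \<Rightarrow> recf \<Rightarrow> nat list \<Rightarrow> nat \<Rightarrow> bool" for \<alpha> where
  ev_Zero: "ev \<alpha> Zero xs 0"
| ev_Succ: "ev \<alpha> Succ (x # xs) (Suc x)"
| ev_Proj: "i < length xs \<Longrightarrow> ev \<alpha> (Proj i) xs (xs ! i)"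
| ev_Orc: "ev \<alpha> Orc (x # xs) (\<alpha> x)"
| ev_Comp: "list_all2 (\<lambda>g y. ev \<alpha> g xs y) gs ys \<Longrightarrow> ev \<alpha> f ys z \<Longrightarrow> ev \<alpha> (Comp f gs) xs z"
| ev_Pr0: "ev \<alpha> g xs y \<Longrightarrow> ev \<alpha> (PrimRec g h) (0 # xs) y"
| ev_PrS: "ev \<alpha> (PrimRec g h) (n # xs) y \<Longrightarrow> ev \<alpha> h (n # y # xs) z
           \<Longrightarrow> ev \<alpha> (PrimRec g h) (Suc n # xs) z"
| ev_Mu: "ev \<alpha> f (n # xs) 0 \<Longrightarrow> (\<forall>m<n. \<exists>y. 0 < y \<and> ev \<alpha> f (m # xs) y)
           \<Longrightarrow> ev \<alpha> (Mu f) xs n"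

text \<open>Computably enumerable sets of naturals: domains of partial recursive
  functions (computations with the trivial oracle, which is itself computable).\<close>
definition ce :: "nat set \<Rightarrow> bool" where
  "ce A \<longleftrightarrow> (\<exists>e. A = {x. \<exists>y. ev (\<lambda>_. 0) e [x] y})"

definition tfun :: "recf \<Rightarrow> (nat \<Rightarrow> nat) \<Rightarrow> (nat \<Rightarrow> nat) option" where
  "tfun e p = (if \<forall>n. \<exists>y. ev p e [n] y then Some (\<lambda>n. THE y. ev p e [n] y) else None)"

definition cyl :: "bool list \<Rightarrow> (nat \<Rightarrow> bool) set" where
  "cyl \<sigma> = {X. \<forall>i<length \<sigma>. X i = \<sigma> ! i}"

definition str_code :: "bool list \<Rightarrow> nat" where
  "str_code \<sigma> = list_encode (map of_bool \<sigma>)"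

definition cantor_lambda :: "(nat \<Rightarrow> bool) measure" where
  "cantor_lambda = PiM UNIV (\<lambda>_::nat. measure_pmf (bernoulli_pmf (1/2)))"

definition cantor_open :: "(nat \<Rightarrow> bool) set \<Rightarrow> bool" where
  "cantor_open V \<longleftrightarrow> V = \<Union>{cyl \<sigma> | \<sigma>. cyl \<sigma> \<subseteq> V}"

definition MLtest :: "(nat \<Rightarrow> (nat \<Rightarrow> bool) set) \<Rightarrow> bool" where
  "MLtest V \<longleftrightarrow> (\<forall>i. cantor_open (V i))
     \<and> ce {prod_encode (i, str_code \<sigma>) | i \<sigma>. cyl \<sigma> \<subseteq> V i}
     \<and> (\<forall>i. emeasure cantor_lambda (V i) \<le> ennreal ((1/2) ^ i))"

definition universal_MLtest :: "(nat \<Rightarrow> (nat \<Rightarrow> bool) set) \<Rightarrow> bool" where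
  "universal_MLtest U \<longleftrightarrow> MLtest U \<and>
     (\<forall>V. MLtest V \<longrightarrow> (\<Inter>i. V i) \<subseteq> (\<Inter>i. U i))"

definition MLR :: "(nat \<Rightarrow> bool) set" where
  "MLR = {X. \<forall>V. MLtest V \<longrightarrow> X \<notin> (\<Inter>i. V i)}"

definition LAY :: "(nat \<Rightarrow> (nat \<Rightarrow> bool) set) \<Rightarrow> (nat \<Rightarrow> bool) \<Rightarrow> nat set" where
  "LAY U X = {i. X \<notin> U i}"

definition RD :: "(nat \<Rightarrow> (nat \<Rightarrow> bool) set) \<Rightarrow> (nat \<Rightarrow> bool) \<Rightarrow> nat set" where
  "RD V X = {LEAST i. X \<notin> V i}"

text \<open>MLR represented by the identity on MLR viewed as a subset of Baire space.\<close>
definition delta_MLR :: "(nat \<Rightarrow> nat) \<Rightarrow> (nat \<Rightarrow> bool) option" where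
  "delta_MLR p = (if (\<forall>n. p n \<le> 1) \<and> (\<lambda>n. p n = 1) \<in> MLR
                  then Some (\<lambda>n. p n = 1) else None)"

definition chi :: "nat \<Rightarrow> nat \<Rightarrow> nat" where
  "chi n = (\<lambda>k. if k = n then 1 else 0)"

definition delta_nat :: "(nat \<Rightarrow> nat) \<Rightarrow> nat option" where
  "delta_nat p = (if \<exists>n. p = chi n then Some (THE n. p = chi n) else None)"

definition realizes ::
  "((nat \<Rightarrow> nat) \<Rightarrow> 'a option) \<Rightarrow> ((nat \<Rightarrow> nat) \<Rightarrow> 'b option) \<Rightarrow> ('a \<Rightarrow> 'b set)
    \<Rightarrow> ((nat \<Rightarrow> nat) \<Rightarrow> (nat \<Rightarrow> nat) option) \<Rightarrow> bool" where
  "realizes dX dY f \<Gamma> \<longleftrightarrow>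
     (\<forall>p x. dX p = Some x \<longrightarrow> (\<exists>q y. \<Gamma> p = Some q \<and> dY q = Some y \<and> y \<in> f x))"

definition sW_le ::
  "((nat \<Rightarrow> nat) \<Rightarrow> 'a option) \<Rightarrow> ((nat \<Rightarrow> nat) \<Rightarrow> 'b option) \<Rightarrow> ('a \<Rightarrow> 'b set)
   \<Rightarrow> ((nat \<Rightarrow> nat) \<Rightarrow> 'c option) \<Rightarrow> ((nat \<Rightarrow> nat) \<Rightarrow> 'd option) \<Rightarrow> ('c \<Rightarrow> 'd set) \<Rightarrow> bool" where
  "sW_le dX dY f dZ dW g \<longleftrightarrow>
     (\<exists>\<Phi> \<Psi>. \<forall>\<Gamma>. realizes dZ dW g \<Gamma> \<longrightarrow>
        realizes dX dY f (\<lambda>p. Option.bind (tfun \<Phi> p) (\<lambda>q. Option.bind (\<Gamma> q) (tfun \<Psi>))))"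

end

theory Submission
  imports Defs
begin

text \<open>Suppose \<Phi>, \<Psi> witness the reduction. Since realizers of LAY U may be arbitrary,
  for each random X the name Y = \<Phi>(X) is random and, for every layer n of Y, \<Psi> must map
  the name of n to the name of rd_V(X). Fix one random X0 and a = rd_V(X0). The layers
  of a random sequence are unbounded, so infinitely many n satisfy \<Psi>(n)(a) = 1, and a
  search dovetailed over n and the running time of \<Psi> gives a computable g with g(j) \<ge> j
  and \<Psi>(g(j))(a) = 1. Then U \<circ> g is a Martin-Loef test, so every random Y leaves some
  U (g j), which forces rd_V(X) = a for every random X. This is impossible: V a contains a
  cylinder around the zero sequence and hence a random sequence, whose rd_V is not a.\<close>

section \<open>Evaluation by a clocked interpreter\<close>

inductive_cases ev_CompE: "ev \<alpha> (Comp f gs) xs y"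
inductive_cases ev_MuE: "ev \<alpha> (Mu f) xs y"

text \<open>State of the bounded search for the least zero of F: 0 while every tested
  argument gave a positive value, 1 after a divergent argument, n + 2 once n was found.\<close>
fun mu_search :: "(nat list \<Rightarrow> nat option) \<Rightarrow> nat list \<Rightarrow> nat \<Rightarrow> nat" where
  "mu_search F xs 0 = 0"
| "mu_search F xs (Suc s) = (if mu_search F xs s = 0 then
     (case F (s # xs) of None \<Rightarrow> 1 | Some y \<Rightarrow> if y = 0 then s + 2 else 0)
   else mu_search F xs s)"

primrec clocked_run :: "(nat \<Rightarrow> nat) \<Rightarrow> nat \<Rightarrow> recf \<Rightarrow> nat list \<Rightarrow> nat option" where
  "clocked_run \<alpha> t Zero xs = Some 0"
| "clocked_run \<alpha> t Succ xs = (case xs of [] \<Rightarrow> None | x # _ \<Rightarrow> Some (Suc x))"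
| "clocked_run \<alpha> t (Proj i) xs = (if i < length xs then Some (xs ! i) else None)"
| "clocked_run \<alpha> t Orc xs = (case xs of [] \<Rightarrow> None | x # _ \<Rightarrow> Some (\<alpha> x))"
| "clocked_run \<alpha> t (Comp f gs) xs = (let ys = map (\<lambda>r. r xs) (map (clocked_run \<alpha> t) gs) in
      if None \<in> set ys then None else clocked_run \<alpha> t f (map the ys))"
| "clocked_run \<alpha> t (PrimRec g h) xs = (case xs of [] \<Rightarrow> None | m # xs' \<Rightarrow>
      rec_nat (clocked_run \<alpha> t g xs')
        (\<lambda>k r. case r of None \<Rightarrow> None | Some y \<Rightarrow> clocked_run \<alpha> t h (k # y # xs')) m)"
| "clocked_run \<alpha> t (Mu f) xs = (let c = mu_search (clocked_run \<alpha> t f) xs t in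
      if 2 \<le> c then Some (c - 2) else None)"

lemma mu_search_eq_0:
  "\<forall>m<n. \<exists>y>0. F (m # xs) = Some y \<Longrightarrow> s \<le> n \<Longrightarrow> mu_search F xs s = 0"
proof (induction s)
  case (Suc s)
  then obtain y where "y > 0" "F (s # xs) = Some y" by (meson Suc_le_lessD)
  then show ?case using Suc by simp
qed simp

lemma mu_search_found:
  "\<forall>m<n. \<exists>y>0. F (m # xs) = Some y \<Longrightarrow> F (n # xs) = Some 0 \<Longrightarrow> n < s
    \<Longrightarrow> mu_search F xs s = n + 2"
proof (induction s)
  case (Suc s)
  show ?case
  proof (cases "n < s")
    case True then show ?thesis using Suc by simp
  next
    case False then have "s = n" using Suc by simp
    then show ?thesis using Suc mu_search_eq_0[of n F xs n] by simp
  qed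
qed simp

lemma mu_search_eq_0_imp_positive:
  "mu_search F xs s = 0 \<Longrightarrow> \<forall>m<s. \<exists>y>0. F (m # xs) = Some y"
proof (induction s)
  case (Suc s)
  then have "mu_search F xs s = 0" by (auto split: if_splits option.splits)
  moreover have "\<exists>y>0. F (s # xs) = Some y"
    using Suc.prems calculation by (auto split: if_splits option.splits)
  ultimately show ?case using Suc.IH less_Suc_eq by auto
qed simp

lemma mu_search_sound:
  "2 \<le> mu_search F xs s \<Longrightarrow> \<exists>n. mu_search F xs s = n + 2 \<and> n < s \<and> F (n # xs) = Some 0
     \<and> (\<forall>m<n. \<exists>y>0. F (m # xs) = Some y)"
proof (induction s)
  case (Suc s)
  show ?case
  proof (cases "mu_search F xs s = 0")
    case True
    then show ?thesis
      using Suc.prems mu_search_eq_0_imp_positive[OF True] by (auto split: if_splits option.splits)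
  next
    case False then show ?thesis using Suc by (auto simp: less_Suc_eq)
  qed
qed simp

lemma clocked_run_mono:
  "clocked_run \<alpha> t f xs = Some y \<Longrightarrow> t \<le> t' \<Longrightarrow> clocked_run \<alpha> t' f xs = Some y"
proof (induction f arbitrary: xs y)
  case (Comp f gs)
  let ?ys = "map (\<lambda>g. clocked_run \<alpha> t g xs) gs"
  have nn: "None \<notin> set ?ys" and r: "clocked_run \<alpha> t f (map the ?ys) = Some y"
    using Comp.prems by (auto simp: Let_def o_def split: if_splits)
  have eq: "map (\<lambda>g. clocked_run \<alpha> t' g xs) gs = ?ys"
  proof (rule map_cong[OF refl])
    fix g assume g: "g \<in> set gs"
    then obtain z where "clocked_run \<alpha> t g xs = Some z" using nn by (cases "clocked_run \<alpha> t g xs") force+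
    then show "clocked_run \<alpha> t' g xs = clocked_run \<alpha> t g xs" using Comp.IH(2)[OF g] Comp.prems(2) by simp
  qed
  show ?case using nn r Comp.IH(1)[OF r Comp.prems(2)] eq by (simp add: Let_def o_def cong: map_cong)
next
  case (PrimRec g h)
  then obtain m xs' where xs: "xs = m # xs'" by (cases xs) auto
  have "rec_nat (clocked_run \<alpha> t g xs') (\<lambda>k r. case r of None \<Rightarrow> None | Some y \<Rightarrow> clocked_run \<alpha> t h (k # y # xs')) m = Some y
     \<Longrightarrow> rec_nat (clocked_run \<alpha> t' g xs') (\<lambda>k r. case r of None \<Rightarrow> None | Some y \<Rightarrow> clocked_run \<alpha> t' h (k # y # xs')) m = Some y" for y
  proof (induction m arbitrary: y)
    case 0 then show ?case using PrimRec by simp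
  next
    case (Suc m)
    then obtain z where z: "rec_nat (clocked_run \<alpha> t g xs') (\<lambda>k r. case r of None \<Rightarrow> None | Some y \<Rightarrow> clocked_run \<alpha> t h (k # y # xs')) m = Some z"
      by (auto split: option.splits)
    show ?case using Suc.prems z Suc.IH[OF z] PrimRec.IH(2)[of "m # z # xs'"] PrimRec.prems(2) by simp
  qed
  then show ?case using PrimRec.prems xs by simp
next
  case (Mu f)
  let ?F = "clocked_run \<alpha> t f" and ?F' = "clocked_run \<alpha> t' f"
  have c: "2 \<le> mu_search ?F xs t" and yv: "y = mu_search ?F xs t - 2"
    using Mu.prems by (auto simp: Let_def split: if_splits)
  from mu_search_sound[OF c] obtain n where n: "mu_search ?F xs t = n + 2" "n < t" "?F (n # xs) = Some 0"
    "\<forall>m<n. \<exists>y>0. ?F (m # xs) = Some y" by blast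
  have "\<forall>m<n. \<exists>y>0. ?F' (m # xs) = Some y" using n(4) Mu.IH Mu.prems(2) by blast
  moreover have "?F' (n # xs) = Some 0" using n(3) Mu.IH Mu.prems(2) by blast
  ultimately have "mu_search ?F' xs t' = n + 2" using mu_search_found[of n ?F' xs t'] n(2) Mu.prems(2) by simp
  then show ?case using yv n(1) by (simp add: Let_def)
qed auto

lemma ev_if_clocked_run: "clocked_run \<alpha> t f xs = Some y \<Longrightarrow> ev \<alpha> f xs y"
proof (induction f arbitrary: xs y)
  case Zero then show ?case by (auto intro: ev.intros)
next
  case Succ then show ?case by (auto intro: ev.intros split: list.splits)
next
  case (Proj i) then show ?case by (auto intro: ev.intros split: if_splits)
next
  case Orc then show ?case by (auto intro: ev.intros split: list.splits)
next
  case (Comp f gs)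
  let ?ys = "map (\<lambda>g. clocked_run \<alpha> t g xs) gs"
  have nn: "None \<notin> set ?ys" and r: "clocked_run \<alpha> t f (map the ?ys) = Some y"
    using Comp.prems by (auto simp: Let_def o_def split: if_splits)
  have "list_all2 (\<lambda>g y. ev \<alpha> g xs y) gs (map the ?ys)"
  proof (rule list_all2_all_nthI)
    fix j assume j: "j < length gs"
    then have "clocked_run \<alpha> t (gs ! j) xs = Some (the (clocked_run \<alpha> t (gs!j) xs))" using nn
      by (metis (no_types, lifting) image_eqI nth_mem option.exhaust_sel set_map)
    then show "ev \<alpha> (gs ! j) xs (map the ?ys ! j)" using Comp.IH(2)[of "gs ! j"] j by simp
  qed simp
  then show ?case using Comp.IH(1)[OF r] by (rule ev_Comp)
next
  case (PrimRec g h)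
  then obtain m xs' where xs: "xs = m # xs'" by (cases xs) auto
  have "rec_nat (clocked_run \<alpha> t g xs') (\<lambda>k r. case r of None \<Rightarrow> None | Some y \<Rightarrow> clocked_run \<alpha> t h (k # y # xs')) m = Some y
     \<Longrightarrow> ev \<alpha> (PrimRec g h) (m # xs') y" for y
  proof (induction m arbitrary: y)
    case 0 then show ?case using PrimRec by (auto intro: ev.intros)
  next
    case (Suc m)
    then obtain z where z: "rec_nat (clocked_run \<alpha> t g xs') (\<lambda>k r. case r of None \<Rightarrow> None | Some y \<Rightarrow> clocked_run \<alpha> t h (k # y # xs')) m = Some z"
      by (auto split: option.splits)
    show ?case using Suc.prems z by (auto intro!: ev_PrS[OF Suc.IH[OF z]] PrimRec.IH(2))
  qed
  then show ?case using PrimRec.prems xs by simp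
next
  case (Mu f)
  let ?F = "clocked_run \<alpha> t f"
  have c: "2 \<le> mu_search ?F xs t" and yv: "y = mu_search ?F xs t - 2"
    using Mu.prems by (auto simp: Let_def split: if_splits)
  from mu_search_sound[OF c] obtain n where n: "mu_search ?F xs t = n + 2" "?F (n # xs) = Some 0"
    "\<forall>m<n. \<exists>y>0. ?F (m # xs) = Some y" by blast
  have "ev \<alpha> (Mu f) xs n"
    by (rule ev_Mu) (use n(2,3) Mu.IH in blast)+
  then show ?case using yv n(1) by simp
qed

lemma clocked_run_list_eventually:
  "list_all2 (\<lambda>g y. \<exists>t. clocked_run \<alpha> t g xs = Some y) gs ys \<Longrightarrow>
   \<exists>T. \<forall>t\<ge>T. map (\<lambda>g. clocked_run \<alpha> t g xs) gs = map Some ys"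
proof (induction rule: list_all2_induct)
  case (Cons g gs y ys)
  then obtain t0 T where "clocked_run \<alpha> t0 g xs = Some y"
    "\<forall>t\<ge>T. map (\<lambda>g. clocked_run \<alpha> t g xs) gs = map Some ys" by blast
  then show ?case by (intro exI[of _ "max t0 T"]) (auto intro: clocked_run_mono)
qed simp

lemma clocked_run_positive_eventually:
  "\<forall>m<n. \<exists>y>0. \<exists>t. clocked_run \<alpha> t f (m # xs) = Some y \<Longrightarrow>
   \<exists>T. \<forall>t\<ge>T. \<forall>m<n. \<exists>y>0. clocked_run \<alpha> t f (m # xs) = Some y"
proof (induction n)
  case (Suc n)
  then obtain T where T: "\<forall>t\<ge>T. \<forall>m<n. \<exists>y>0. clocked_run \<alpha> t f (m # xs) = Some y" by auto
  obtain y t0 where "y > 0" "clocked_run \<alpha> t0 f (n # xs) = Some y" using Suc.prems by blast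
  then show ?case using T by (intro exI[of _ "max t0 T"]) (auto simp: less_Suc_eq intro: clocked_run_mono)
qed simp

lemma clocked_run_if_ev: "ev \<alpha> f xs y \<Longrightarrow> \<exists>t. clocked_run \<alpha> t f xs = Some y"
proof (induction rule: ev.induct)
  case (ev_Comp xs gs ys f z)
  have "list_all2 (\<lambda>g y. \<exists>t. clocked_run \<alpha> t g xs = Some y) gs ys"
    using ev_Comp.IH(1) by (rule list_all2_mono) auto
  from clocked_run_list_eventually[OF this] obtain T
    where T: "\<forall>t\<ge>T. map (\<lambda>g. clocked_run \<alpha> t g xs) gs = map Some ys" by blast
  obtain t0 where t0: "clocked_run \<alpha> t0 f ys = Some z" using ev_Comp.IH(2) by blast
  have "map (\<lambda>g. clocked_run \<alpha> (max t0 T) g xs) gs = map Some ys" using T by simp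
  moreover have "clocked_run \<alpha> (max t0 T) f ys = Some z"
    using t0 clocked_run_mono[of \<alpha> t0 f ys z "max t0 T"] by simp
  ultimately show ?case by (intro exI[of _ "max t0 T"]) (simp add: Let_def o_def)
next
  case (ev_PrS g h n xs y z)
  then obtain t1 t2 where "clocked_run \<alpha> t1 (PrimRec g h) (n # xs) = Some y"
    "clocked_run \<alpha> t2 h (n # y # xs) = Some z" by blast
  then have "clocked_run \<alpha> (max t1 t2) (PrimRec g h) (n # xs) = Some y"
    "clocked_run \<alpha> (max t1 t2) h (n # y # xs) = Some z"
    using clocked_run_mono[of \<alpha> t1 "PrimRec g h" "n # xs" y "max t1 t2"]
      clocked_run_mono[of \<alpha> t2 h "n # y # xs" z "max t1 t2"] by auto
  then show ?case by (intro exI[of _ "max t1 t2"]) simp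
next
  case (ev_Mu f n xs)
  obtain T where T: "\<forall>t\<ge>T. \<forall>m<n. \<exists>y>0. clocked_run \<alpha> t f (m # xs) = Some y"
    using clocked_run_positive_eventually[of n \<alpha> f xs] ev_Mu.IH(2) by blast
  obtain t0 where t0: "clocked_run \<alpha> t0 f (n # xs) = Some 0" using ev_Mu.IH(1) by blast
  let ?t = "max (max t0 T) (Suc n)"
  have "mu_search (clocked_run \<alpha> ?t f) xs ?t = n + 2"
  proof (rule mu_search_found)
    show "\<forall>m<n. \<exists>y>0. clocked_run \<alpha> ?t f (m # xs) = Some y" using T by simp
    show "clocked_run \<alpha> ?t f (n # xs) = Some 0"
      using t0 clocked_run_mono[of \<alpha> t0 f "n # xs" 0 ?t] by simp
  qed simp
  then show ?case by (intro exI[of _ ?t]) (simp add: Let_def)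
qed auto

lemma ev_deterministic: "ev \<alpha> f xs y \<Longrightarrow> ev \<alpha> f xs y' \<Longrightarrow> y = y'"
proof -
  assume "ev \<alpha> f xs y" "ev \<alpha> f xs y'"
  then obtain t t' where "clocked_run \<alpha> t f xs = Some y" "clocked_run \<alpha> t' f xs = Some y'"
    using clocked_run_if_ev by blast
  then have "clocked_run \<alpha> (max t t') f xs = Some y" "clocked_run \<alpha> (max t t') f xs = Some y'"
    using clocked_run_mono[of \<alpha> t f xs y "max t t'"] clocked_run_mono[of \<alpha> t' f xs y' "max t t'"]
    by auto
  then show ?thesis by simp
qed

section \<open>Total functions computed uniformly in the oracle\<close>

definition computes :: "recf \<Rightarrow> nat \<Rightarrow> (nat list \<Rightarrow> nat) \<Rightarrow> bool" where
  "computes F k fn \<longleftrightarrow> (\<forall>\<beta> xs. length xs = k \<longrightarrow> ev \<beta> F xs (fn xs))"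

lemma computesD: "computes F k fn \<Longrightarrow> length xs = k \<Longrightarrow> ev \<beta> F xs (fn xs)"
  unfolding computes_def by blast

lemma computes_ev_iff: "computes F k fn \<Longrightarrow> length xs = k \<Longrightarrow> ev \<beta> F xs y \<longleftrightarrow> y = fn xs"
  using computesD ev_deterministic by blast

lemma computes_cong:
  "computes F k f \<Longrightarrow> (\<And>xs. length xs = k \<Longrightarrow> f xs = g xs) \<Longrightarrow> computes F k g"
  unfolding computes_def by auto

lemma computes_Zero: "computes Zero k (\<lambda>_. 0)"
  unfolding computes_def by (auto intro: ev.intros)

lemma computes_Succ: "0 < k \<Longrightarrow> computes Succ k (\<lambda>xs. Suc (xs ! 0))"
  unfolding computes_def by (metis ev_Succ length_0_conv less_numeral_extra(3) list.exhaust nth_Cons_0)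

lemma computes_Proj: "i < k \<Longrightarrow> computes (Proj i) k (\<lambda>xs. xs ! i)"
  unfolding computes_def by (auto intro: ev.intros)

lemma computes_Comp:
  assumes gs: "list_all2 (\<lambda>g gf. computes g k gf) gs gfs" and f: "computes f (length gs) fn"
    and F: "\<And>xs. length xs = k \<Longrightarrow> F xs = fn (map (\<lambda>gf. gf xs) gfs)"
  shows "computes (Comp f gs) k F"
  unfolding computes_def
proof (intro allI impI)
  fix \<beta> and xs :: "nat list" assume l: "length xs = k"
  have "list_all2 (\<lambda>g y. ev \<beta> g xs y) gs (map (\<lambda>gf. gf xs) gfs)"
    using gs l by (auto simp: list_all2_conv_all_nth intro: computesD)
  moreover have "ev \<beta> f (map (\<lambda>gf. gf xs) gfs) (fn (map (\<lambda>gf. gf xs) gfs))"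
    using computesD[OF f] list_all2_lengthD[OF gs] by simp
  ultimately show "ev \<beta> (Comp f gs) xs (F xs)" unfolding F[OF l] by (rule ev_Comp)
qed

lemma computes_PrimRec:
  assumes "0 < K" and g: "computes g (K - 1) gf" and h: "computes h (K + 1) hf"
    and F: "\<And>xs. length xs = K \<Longrightarrow> F xs = rec_nat (gf (tl xs)) (\<lambda>m r. hf (m # r # tl xs)) (xs ! 0)"
  shows "computes (PrimRec g h) K F"
  unfolding computes_def
proof (intro allI impI)
  fix \<beta> and xs :: "nat list" assume l: "length xs = K"
  then obtain m ys where xs: "xs = m # ys" and ly: "length ys = K - 1"
    using \<open>0 < K\<close> by (cases xs) auto
  have "ev \<beta> (PrimRec g h) (m # ys) (rec_nat (gf ys) (\<lambda>m r. hf (m # r # ys)) m)"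
  proof (induction m)
    case 0 show ?case using computesD[OF g ly] by (simp add: ev_Pr0)
  next
    case (Suc m)
    have "length (m # rec_nat (gf ys) (\<lambda>m r. hf (m # r # ys)) m # ys) = K + 1"
      using ly \<open>0 < K\<close> by simp
    from ev_PrS[OF Suc computesD[OF h this]] show ?case by simp
  qed
  then show "ev \<beta> (PrimRec g h) xs (F xs)" using F[OF l] xs by simp
qed

lemma computes_Mu:
  assumes f: "computes f (Suc k) ff" and ex: "\<And>xs. length xs = k \<Longrightarrow> \<exists>n. ff (n # xs) = 0"
    and F: "\<And>xs. length xs = k \<Longrightarrow> F xs = (LEAST n. ff (n # xs) = 0)"
  shows "computes (Mu f) k F"
  unfolding computes_def
proof (intro allI impI)
  fix \<beta> and xs :: "nat list" assume l: "length xs = k"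
  let ?n = "LEAST n. ff (n # xs) = 0"
  have "ff (?n # xs) = 0" using ex[OF l] by (rule LeastI_ex)
  moreover have "\<forall>m<?n. ff (m # xs) > 0" using not_less_Least by blast
  moreover have "\<And>m. ev \<beta> f (m # xs) (ff (m # xs))" using f l by (simp add: computesD)
  ultimately show "ev \<beta> (Mu f) xs (F xs)" unfolding F[OF l] by (intro ev_Mu) (metis, blast)
qed

lemmas computes_rules = computes_Comp computes_PrimRec computes_Zero computes_Succ computes_Proj
  list_all2_Cons[THEN iffD2, OF conjI] list.rel_intros(1)

lemma computes_Comp1:
  "computes f 1 fn \<Longrightarrow> computes a K fa \<Longrightarrow> (\<And>xs. length xs = K \<Longrightarrow> F xs = fn [fa xs])
    \<Longrightarrow> computes (Comp f [a]) K F"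
  by (rule computes_Comp[where gfs="[fa]"]) auto

lemma computes_Comp2:
  "computes f 2 fn \<Longrightarrow> computes a K fa \<Longrightarrow> computes b K fb
    \<Longrightarrow> (\<And>xs. length xs = K \<Longrightarrow> F xs = fn [fa xs, fb xs]) \<Longrightarrow> computes (Comp f [a, b]) K F"
  by (rule computes_Comp[where gfs="[fa, fb]"]) (auto simp: numeral_2_eq_2)

lemma computes_Comp3:
  "computes f 3 fn \<Longrightarrow> computes a K fa \<Longrightarrow> computes b K fb \<Longrightarrow> computes c K fc
    \<Longrightarrow> (\<And>xs. length xs = K \<Longrightarrow> F xs = fn [fa xs, fb xs, fc xs]) \<Longrightarrow> computes (Comp f [a, b, c]) K F"
  by (rule computes_Comp[where gfs="[fa, fb, fc]"]) (auto simp: numeral_3_eq_3)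

lemma computes_Projs:
  "b \<le> K \<Longrightarrow> list_all2 (\<lambda>g gf. computes g K gf) (map Proj [a..<b]) (map (\<lambda>i xs. xs ! i) [a..<b])"
  by (auto simp: list_all2_conv_all_nth intro: computes_Proj)

lemma computes_Comp_Projs:
  "computes F m f \<Longrightarrow> length ps = m \<Longrightarrow> \<forall>i\<in>set ps. i < K
    \<Longrightarrow> computes (Comp F (map Proj ps)) K (\<lambda>zs. f (map (\<lambda>i. zs ! i) ps))"
  by (rule computes_Comp[where gfs="map (\<lambda>i zs. zs ! i) ps"])
    (auto simp: list_all2_conv_all_nth o_def intro: computes_Proj)

lemma map_nth_upt_eq_drop: "length zs = K \<Longrightarrow> a \<le> K \<Longrightarrow> map (\<lambda>i. zs ! i) [a..<K] = drop a zs"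
  by (rule nth_equalityI) auto

definition ONE :: recf where "ONE = Comp Succ [Zero]"

lemma computes_ONE: "computes ONE k (\<lambda>_. 1)"
  unfolding ONE_def by (rule computes_rules | simp)+

primrec NUMERAL :: "nat \<Rightarrow> recf" where
  "NUMERAL 0 = Zero"
| "NUMERAL (Suc n) = Comp Succ [NUMERAL n]"

lemma computes_NUMERAL: "computes (NUMERAL a) k (\<lambda>_. a)"
proof (induction a)
  case (Suc a)
  show ?case by (simp, rule computes_Comp1[OF computes_Succ[of 1] Suc]) simp_all
qed (simp add: computes_Zero)

definition ADD :: recf where "ADD = PrimRec (Proj 0) (Comp Succ [Proj 1])"

lemma rec_nat_Suc_eq_add: "rec_nat (b::nat) (\<lambda>m r. Suc r) a = a + b"
  by (induction a) auto

lemma computes_ADD: "k = 2 \<Longrightarrow> computes ADD k (\<lambda>xs. xs ! 0 + xs ! 1)"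
  unfolding ADD_def by (rule computes_rules | simp)+ (simp add: rec_nat_Suc_eq_add nth_tl)

lemma rec_nat_eq_case_nat: "rec_nat a (\<lambda>m r. f m) n = (case n of 0 \<Rightarrow> a | Suc m \<Rightarrow> f m)"
  by (cases n) simp_all

definition PRED :: recf where "PRED = PrimRec Zero (Proj 0)"

lemma computes_PRED: "k = 1 \<Longrightarrow> computes PRED k (\<lambda>xs. xs ! 0 - 1)"
  unfolding PRED_def by (rule computes_rules | simp)+ (simp add: rec_nat_eq_case_nat split: nat.split)

definition SUBR :: recf where "SUBR = PrimRec (Proj 0) (Comp PRED [Proj 1])"

lemma rec_nat_pred_eq_diff: "rec_nat (b::nat) (\<lambda>m r. r - Suc 0) a = b - a"
  by (induction a) auto

lemma computes_SUBR: "k = 2 \<Longrightarrow> computes SUBR k (\<lambda>xs. xs ! 1 - xs ! 0)"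
  unfolding SUBR_def
  by (rule computes_rules computes_PRED | simp)+ (simp add: rec_nat_pred_eq_diff nth_tl)

definition MONUS :: recf where "MONUS = Comp SUBR [Proj 1, Proj 0]"

lemma computes_MONUS: "k = 2 \<Longrightarrow> computes MONUS k (\<lambda>xs. xs ! 0 - xs ! 1)"
  unfolding MONUS_def by (rule computes_rules computes_SUBR | simp)+

definition MULT :: recf where "MULT = PrimRec Zero (Comp ADD [Proj 1, Proj 2])"

lemma rec_nat_add_eq_mult: "rec_nat 0 (\<lambda>m r. r + (b::nat)) a = a * b"
  by (induction a) auto

lemma computes_MULT: "k = 2 \<Longrightarrow> computes MULT k (\<lambda>xs. xs ! 0 * xs ! 1)"
  unfolding MULT_def
  by (rule computes_rules computes_ADD | simp)+ (simp add: rec_nat_add_eq_mult nth_tl)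

definition SG :: recf where "SG = PrimRec Zero ONE"

lemma computes_SG: "k = 1 \<Longrightarrow> computes SG k (\<lambda>xs. if xs ! 0 = 0 then 0 else 1)"
  unfolding SG_def by (rule computes_rules computes_ONE | simp)+ (simp add: rec_nat_eq_case_nat split: nat.split)

definition NSG :: recf where "NSG = PrimRec ONE Zero"

lemma computes_NSG: "k = 1 \<Longrightarrow> computes NSG k (\<lambda>xs. if xs ! 0 = 0 then 1 else 0)"
  unfolding NSG_def by (rule computes_rules computes_ONE | simp)+ (simp add: rec_nat_eq_case_nat split: nat.split)

definition EQN :: recf where "EQN = Comp NSG [Comp ADD [MONUS, Comp MONUS [Proj 1, Proj 0]]]"

lemma computes_EQN: "k = 2 \<Longrightarrow> computes EQN k (\<lambda>xs. if xs ! 0 = xs ! 1 then 1 else 0)"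
  unfolding EQN_def by (rule computes_rules computes_NSG computes_ADD computes_MONUS | simp)+

definition COND :: recf where
  "COND = Comp ADD [Comp MULT [Comp NSG [Proj 0], Proj 1], Comp MULT [Comp SG [Proj 0], Proj 2]]"

lemma computes_COND: "k = 3 \<Longrightarrow> computes COND k (\<lambda>xs. if xs ! 0 = 0 then xs ! 1 else xs ! 2)"
  unfolding COND_def
  by (rule computes_rules computes_NSG computes_SG computes_ADD computes_MULT | simp)+

definition PRODL :: "recf list \<Rightarrow> recf" where
  "PRODL Gs = foldr (\<lambda>G acc. Comp MULT [G, acc]) Gs ONE"

lemma computes_PRODL:
  "list_all2 (\<lambda>G gf. computes G K gf) Gs gfs
    \<Longrightarrow> computes (PRODL Gs) K (\<lambda>zs. prod_list (map (\<lambda>gf. gf zs) gfs))"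
proof (induction rule: list_all2_induct)
  case Nil then show ?case using computes_ONE[of K] by (simp add: PRODL_def)
next
  case (Cons G Gs gf gfs)
  have "PRODL (G # Gs) = Comp MULT [G, PRODL Gs]" by (simp add: PRODL_def)
  then show ?case
    using computes_Comp2[OF computes_MULT Cons.hyps(1) Cons.IH] by simp
qed

section \<open>Computing the Cantor pairing\<close>

definition TRI :: recf where "TRI = PrimRec Zero (Comp ADD [Proj 1, Comp Succ [Proj 0]])"

lemma rec_nat_eq_triangle: "rec_nat 0 (\<lambda>m r. Suc (r + m)) a = triangle a"
  by (induction a) auto

lemma computes_TRI: "k = 1 \<Longrightarrow> computes TRI k (\<lambda>xs. triangle (xs ! 0))"
  unfolding TRI_def by (rule computes_rules computes_ADD | simp)+ (simp add: rec_nat_eq_triangle)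

definition PE :: recf where "PE = Comp ADD [Comp TRI [ADD], Proj 0]"

lemma computes_PE: "k = 2 \<Longrightarrow> computes PE k (\<lambda>xs. prod_encode (xs ! 0, xs ! 1))"
  unfolding PE_def
  by (rule computes_rules computes_TRI computes_ADD | simp add: prod_encode_def)+

definition diagonal_of :: "nat \<Rightarrow> nat" where "diagonal_of x = (LEAST m. x < triangle (Suc m))"

lemma le_triangle: "m \<le> triangle m"
  by (induction m) auto

lemma prod_decode_diagonal_of:
  "prod_decode x = (x - triangle (diagonal_of x), diagonal_of x - (x - triangle (diagonal_of x)))"
proof -
  let ?m = "diagonal_of x"
  have "x < triangle (Suc x)" using le_triangle[of x] by simp
  then have lt: "x < triangle (Suc ?m)" unfolding diagonal_of_def by (rule LeastI)
  have ge: "triangle ?m \<le> x"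
  proof (cases ?m)
    case (Suc k)
    then have "\<not> x < triangle (Suc k)" using not_less_Least[of k "\<lambda>m. x < triangle (Suc m)"]
      unfolding diagonal_of_def by simp
    then show ?thesis using Suc by simp
  qed simp
  let ?a = "x - triangle ?m"
  have "?a \<le> ?m" using lt ge by simp
  then have "prod_encode (?a, ?m - ?a) = x" using ge by (simp add: prod_encode_def)
  then show ?thesis by (metis prod_encode_inverse)
qed

definition PDM :: recf where
  "PDM = Mu (Comp MONUS [Comp Succ [Proj 1], Comp TRI [Comp Succ [Proj 0]]])"

lemma computes_PDM: "k = 1 \<Longrightarrow> computes PDM k (\<lambda>xs. diagonal_of (xs ! 0))"
  unfolding PDM_def
proof (rule computes_Mu)
  show "computes (Comp MONUS [Comp Succ [Proj 1], Comp TRI [Comp Succ [Proj 0]]]) (Suc k)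
    (\<lambda>xs. Suc (xs ! 1) - triangle (Suc (xs ! 0)))" if "k = 1"
    by (rule computes_rules computes_TRI computes_MONUS | simp add: that)+
  show "\<exists>n. Suc ((n # xs) ! 1) - triangle (Suc ((n # xs) ! 0)) = 0" for xs
    by (rule exI[of _ "xs ! 0"]) (simp add: le_triangle le_imp_less_Suc)
  show "diagonal_of (xs ! 0) = (LEAST n. Suc ((n # xs) ! 1) - triangle (Suc ((n # xs) ! 0)) = 0)" for xs
    by (simp add: diagonal_of_def less_Suc_eq_le)
qed

definition FST :: recf where "FST = Comp MONUS [Proj 0, Comp TRI [PDM]]"

lemma computes_FST: "k = 1 \<Longrightarrow> computes FST k (\<lambda>xs. fst (prod_decode (xs ! 0)))"
  unfolding FST_def
  by (rule computes_rules computes_TRI computes_MONUS computes_PDM | simp add: prod_decode_diagonal_of)+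

definition SND :: recf where "SND = Comp MONUS [PDM, FST]"

lemma computes_SND: "k = 1 \<Longrightarrow> computes SND k (\<lambda>xs. snd (prod_decode (xs ! 0)))"
  unfolding SND_def
  by (rule computes_rules computes_FST computes_MONUS computes_PDM | simp add: prod_decode_diagonal_of)+

section \<open>The clocked interpreter is computable\<close>

definition option_code :: "nat option \<Rightarrow> nat" where "option_code = case_option 0 Suc"

lemma option_code_simps [simp]: "option_code None = 0" "option_code (Some y) = Suc y"
  by (simp_all add: option_code_def)

text \<open>The argument list starts with the clock and the index n of the oracle chi n.\<close>
definition run_code :: "recf \<Rightarrow> nat list \<Rightarrow> nat" where
  "run_code f zs = option_code (clocked_run (chi (zs ! 1)) (zs ! 0) f (drop 2 zs))"

lemma run_code_Cons_Cons: "run_code f (t # n # xs) = option_code (clocked_run (chi n) t f xs)"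
  by (simp add: run_code_def)

definition run_computable :: "recf \<Rightarrow> bool" where
  "run_computable f \<longleftrightarrow> (\<forall>k. \<exists>F. computes F (k + 2) (run_code f))"

lemma computes_Cons_Cons_cong:
  assumes "computes F (k + 2) f" and "\<And>t n xs. length xs = k \<Longrightarrow> f (t # n # xs) = g (t # n # xs)"
  shows "computes F (k + 2) g"
proof (rule computes_cong[OF assms(1)])
  fix zs :: "nat list" assume "length zs = k + 2"
  then obtain t n xs where "zs = t # n # xs" "length xs = k"
    by (metis add_2_eq_Suc' length_Suc_conv)
  then show "f zs = g zs" using assms(2) by simp
qed

lemma run_computable_Zero: "run_computable Zero"
  unfolding run_computable_def by (metis computes_ONE computes_cong run_code_def option_code_simps(2)
    clocked_run.simps(1) One_nat_def)

lemma run_computable_Succ: "run_computable Succ"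
  unfolding run_computable_def
proof
  fix k
  show "\<exists>F. computes F (k + 2) (run_code Succ)"
  proof (cases k)
    case 0
    show ?thesis
      by (rule exI, rule computes_Cons_Cons_cong[OF computes_Zero]) (simp add: 0 run_code_Cons_Cons)
  next
    case (Suc k')
    have "computes (Comp Succ [Comp Succ [Proj 2]]) (k + 2) (\<lambda>zs. Suc (Suc (zs ! 2)))"
      by (rule computes_rules | simp add: Suc)+
    then show ?thesis
      by (intro exI, rule computes_Cons_Cons_cong) (auto simp: Suc length_Suc_conv run_code_Cons_Cons)
  qed
qed

lemma run_computable_Proj: "run_computable (Proj i)"
  unfolding run_computable_def
proof
  fix k
  show "\<exists>F. computes F (k + 2) (run_code (Proj i))"
  proof (cases "i < k")
    case True
    have "computes (Comp Succ [Proj (i + 2)]) (k + 2) (\<lambda>zs. Suc (zs ! (i + 2)))"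
      by (rule computes_rules | simp add: True)+
    then show ?thesis
      by (intro exI, rule computes_Cons_Cons_cong) (auto simp: True run_code_Cons_Cons)
  next
    case False
    show ?thesis
      by (rule exI, rule computes_Cons_Cons_cong[OF computes_Zero]) (simp add: False run_code_Cons_Cons)
  qed
qed

lemma run_computable_Orc: "run_computable Orc"
  unfolding run_computable_def
proof
  fix k
  show "\<exists>F. computes F (k + 2) (run_code Orc)"
  proof (cases k)
    case 0
    show ?thesis
      by (rule exI, rule computes_Cons_Cons_cong[OF computes_Zero]) (simp add: 0 run_code_Cons_Cons)
  next
    case (Suc k')
    have "computes (Comp Succ [Comp EQN [Proj 2, Proj 1]]) (k + 2)
        (\<lambda>zs. Suc (if zs ! 2 = zs ! 1 then 1 else 0))"
      by (rule computes_rules computes_EQN | simp add: Suc)+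
    then show ?thesis
      by (intro exI, rule computes_Cons_Cons_cong) (auto simp: Suc length_Suc_conv chi_def run_code_Cons_Cons)
  qed
qed

text \<open>On codes, a divergent argument shows up as a zero factor of the product.\<close>
lemma run_code_Comp:
  "run_code (Comp f gs) (t # n # xs) =
     (if prod_list (map (\<lambda>g. run_code g (t # n # xs)) gs) = 0 then 0 else 1)
     * run_code f (t # n # map (\<lambda>g. run_code g (t # n # xs) - 1) gs)"
proof (cases "None \<in> set (map (\<lambda>g. clocked_run (chi n) t g xs) gs)")
  case True
  then have "prod_list (map (\<lambda>g. run_code g (t # n # xs)) gs) = 0"
    by (force simp: prod_list_zero_iff run_code_Cons_Cons)
  then show ?thesis using True by (simp add: Let_def o_def run_code_Cons_Cons)
next
  case False
  then have "\<forall>g\<in>set gs. run_code g (t # n # xs) \<noteq> 0"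
    by (force simp: option_code_def run_code_Cons_Cons split: option.splits)
  then have "prod_list (map (\<lambda>g. run_code g (t # n # xs)) gs) \<noteq> 0"
    by (auto simp: prod_list_zero_iff)
  moreover have args: "map (\<lambda>g. run_code g (t # n # xs) - 1) gs
      = map (\<lambda>g. the (clocked_run (chi n) t g xs)) gs"
    using False by (force simp: option_code_def run_code_Cons_Cons split: option.splits)
  ultimately show ?thesis using False unfolding args by (simp add: Let_def o_def run_code_Cons_Cons)
qed

lemma computes_map_PRED:
  "list_all2 (\<lambda>G gf. computes G K gf) Gs gfs \<Longrightarrow>
   list_all2 (\<lambda>G gf. computes G K gf) (map (\<lambda>G. Comp PRED [G]) Gs) (map (\<lambda>gf zs. gf zs - 1) gfs)"
  by (auto simp: list_all2_conv_all_nth intro!: computes_Comp1[OF computes_PRED[OF refl]])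

lemma computes_Comp_strict:
  assumes Gs: "list_all2 (\<lambda>G gf. computes G K gf) Gs gfs"
    and Ff: "computes Ff (length Gs + 2) ff" and "2 \<le> K"
  shows "computes (Comp MULT [Comp SG [PRODL Gs], Comp Ff ([Proj 0, Proj 1] @ map (\<lambda>G. Comp PRED [G]) Gs)]) K
     (\<lambda>zs. (if prod_list (map (\<lambda>gf. gf zs) gfs) = 0 then 0 else 1)
       * ff (zs ! 0 # zs ! 1 # map (\<lambda>gf. gf zs - 1) gfs))"
proof (rule computes_Comp2[OF computes_MULT[OF refl]])
  show "computes (Comp SG [PRODL Gs]) K (\<lambda>zs. if prod_list (map (\<lambda>gf. gf zs) gfs) = 0 then 0 else 1)"
    by (rule computes_Comp1[OF computes_SG[OF refl] computes_PRODL[OF Gs]]) simp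
  have "list_all2 (\<lambda>G gf. computes G K gf) ([Proj 0, Proj 1] @ map (\<lambda>G. Comp PRED [G]) Gs)
      ([\<lambda>zs. zs ! 0, \<lambda>zs. zs ! 1] @ map (\<lambda>gf zs. gf zs - 1) gfs)"
    using assms by (intro list_all2_appendI computes_map_PRED) (auto intro: computes_Proj)
  then show "computes (Comp Ff ([Proj 0, Proj 1] @ map (\<lambda>G. Comp PRED [G]) Gs)) K
      (\<lambda>zs. ff (zs ! 0 # zs ! 1 # map (\<lambda>gf. gf zs - 1) gfs))"
    by (rule computes_Comp) (use Ff list_all2_lengthD[OF Gs] in \<open>simp_all add: o_def\<close>)
qed simp

lemma bchoice_list_all2: "\<forall>x\<in>set xs. \<exists>y. P x y \<Longrightarrow> \<exists>ys. list_all2 P xs ys"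
  by (induction xs) auto

lemma run_computable_Comp:
  assumes f: "run_computable f" and gs: "\<forall>g\<in>set gs. run_computable g"
  shows "run_computable (Comp f gs)"
  unfolding run_computable_def
proof
  fix k
  obtain Ff where Ff: "computes Ff (length gs + 2) (run_code f)"
    using f unfolding run_computable_def by blast
  obtain Gs where "list_all2 (\<lambda>g G. computes G (k + 2) (run_code g)) gs Gs"
    using bchoice_list_all2 gs unfolding run_computable_def by meson
  then have Gs: "list_all2 (\<lambda>G gf. computes G (k + 2) gf) Gs (map run_code gs)"
    by (auto simp: list_all2_conv_all_nth)
  have "computes Ff (length Gs + 2) (run_code f)"
    using Ff list_all2_lengthD[OF Gs] by simp
  from computes_Comp_strict[OF Gs this le_add2]
  show "\<exists>F. computes F (k + 2) (run_code (Comp f gs))"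
    by (intro exI, rule computes_Cons_Cons_cong) (auto simp: run_code_Comp o_def)
qed

lemma rec_nat_option_code:
  "rec_nat (option_code A) (\<lambda>j r. (if r = 0 then 0 else 1) * option_code (H j (r - 1))) m =
   option_code (rec_nat A (\<lambda>j r. case r of None \<Rightarrow> None | Some y \<Rightarrow> H j y) m)"
  by (induction m) (auto split: option.splits)

lemma run_code_PrimRec:
  "run_code (PrimRec g h) (t # n # m # xs) =
     rec_nat (run_code g (t # n # xs))
       (\<lambda>j r. (if r = 0 then 0 else 1) * run_code h (t # n # j # (r - 1) # xs)) m"
  using rec_nat_option_code[of "clocked_run (chi n) t g xs" "\<lambda>j y. clocked_run (chi n) t h (j # y # xs)"]
  by (simp add: run_code_Cons_Cons)

lemma computes_PrimRec_step:
  assumes Fh: "computes Fh (K + 4) hf"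
  shows "computes (Comp MULT [Comp SG [Proj 1],
      Comp Fh ([Proj 2, Proj 3, Proj 0, Comp PRED [Proj 1]] @ map Proj [4..<K + 4])]) (K + 4)
    (\<lambda>ws. (if ws ! 1 = 0 then 0 else 1) * hf (ws ! 2 # ws ! 3 # ws ! 0 # (ws ! 1 - 1) # drop 4 ws))"
proof (rule computes_Comp2[OF computes_MULT[OF refl]])
  show "computes (Comp SG [Proj 1]) (K + 4) (\<lambda>ws. if ws ! 1 = 0 then 0 else 1)"
    by (rule computes_rules computes_SG | simp)+
  let ?args = "[Proj 2, Proj 3, Proj 0, Comp PRED [Proj 1]] @ map Proj [4..<K + 4]"
  have args: "list_all2 (\<lambda>g gf. computes g (K + 4) gf) ?args
      ([\<lambda>ws. ws ! 2, \<lambda>ws. ws ! 3, \<lambda>ws. ws ! 0, \<lambda>ws. ws ! 1 - 1] @ map (\<lambda>i ws. ws ! i) [4..<K + 4])"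
    by (intro list_all2_appendI computes_Projs)
      (auto intro!: computes_Proj computes_Comp1[OF computes_PRED[OF refl]])
  have "length ?args = K + 4" by simp
  show "computes (Comp Fh ?args) (K + 4) (\<lambda>ws. hf (ws ! 2 # ws ! 3 # ws ! 0 # (ws ! 1 - 1) # drop 4 ws))"
  proof (rule computes_Comp[OF args])
    show "computes Fh (length ?args) hf" unfolding \<open>length ?args = K + 4\<close> by (rule Fh)
  qed (simp add: map_nth_upt_eq_drop o_def)
qed simp

lemma run_computable_PrimRec:
  assumes g: "run_computable g" and h: "run_computable h"
  shows "run_computable (PrimRec g h)"
  unfolding run_computable_def
proof
  fix k
  show "\<exists>F. computes F (k + 2) (run_code (PrimRec g h))"
  proof (cases k)
    case 0
    show ?thesis
      by (rule exI, rule computes_Cons_Cons_cong[OF computes_Zero]) (simp add: 0 run_code_Cons_Cons)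
  next
    case (Suc K)
    obtain Fg where Fg: "computes Fg (K + 2) (run_code g)"
      using g unfolding run_computable_def by blast
    obtain Fh where "computes Fh (K + 2 + 2) (run_code h)"
      using h unfolding run_computable_def by blast
    then have "computes Fh (K + 4) (run_code h)" by (simp add: eval_nat_numeral)
    from computes_PrimRec_step[OF this] obtain S where S: "computes S (K + 4)
      (\<lambda>ws. (if ws ! 1 = 0 then 0 else 1) * run_code h (ws ! 2 # ws ! 3 # ws ! 0 # (ws ! 1 - 1) # drop 4 ws))"
      by blast
    have "computes (PrimRec Fg S) (K + 3)
      (\<lambda>vs. rec_nat (run_code g (tl vs)) (\<lambda>j r. (if r = 0 then 0 else 1)
         * run_code h (vs ! 1 # vs ! 2 # j # (r - 1) # drop 3 vs)) (vs ! 0))"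
    proof (rule computes_PrimRec)
      show "computes Fg (K + 3 - 1) (run_code g)" using Fg by simp
      show "computes S (K + 3 + 1) (\<lambda>ws. (if ws ! 1 = 0 then 0 else 1)
          * run_code h (ws ! 2 # ws ! 3 # ws ! 0 # (ws ! 1 - 1) # drop 4 ws))"
        using S by (simp add: eval_nat_numeral)
    qed (auto simp: length_Suc_conv numeral_3_eq_3)
    then have "computes (Comp (PrimRec Fg S) (map Proj ([2, 0, 1] @ [3..<K + 3]))) (k + 2)
      (\<lambda>zs. rec_nat (run_code g (zs ! 0 # zs ! 1 # drop 3 zs)) (\<lambda>j r. (if r = 0 then 0 else 1)
         * run_code h (zs ! 0 # zs ! 1 # j # (r - 1) # drop 3 zs)) (zs ! 2))"
      by (rule computes_cong[OF computes_Comp_Projs]) (simp_all add: Suc map_nth_upt_eq_drop)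
    then show ?thesis
      by (intro exI, rule computes_Cons_Cons_cong) (auto simp: Suc length_Suc_conv run_code_PrimRec)
  qed
qed

lemma mu_search_eq_rec_nat:
  "mu_search F xs n = rec_nat 0 (\<lambda>s c. if c = 0 then (if option_code (F (s # xs)) = 0 then 1
     else if option_code (F (s # xs)) - 1 = 0 then s + 2 else 0) else c) n"
  by (induction n) (auto split: option.splits)

lemma run_code_Mu:
  "run_code (Mu f) (t # n # xs) =
     rec_nat 0 (\<lambda>s c. if c = 0 then (if run_code f (t # n # s # xs) = 0 then 1
       else if run_code f (t # n # s # xs) - 1 = 0 then s + 2 else 0) else c) t - 1"
proof -
  have "rec_nat 0 (\<lambda>s c. if c = 0 then (if run_code f (t # n # s # xs) = 0 then 1
       else if run_code f (t # n # s # xs) - 1 = 0 then s + 2 else 0) else c) t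
      = mu_search (clocked_run (chi n) t f) xs t"
    by (simp add: mu_search_eq_rec_nat run_code_Cons_Cons cong: if_cong)
  then show ?thesis by (simp add: Let_def run_code_Cons_Cons) arith
qed

lemma computes_mu_search_step:
  assumes R: "computes R K r" and K: "2 \<le> K"
  shows "computes (Comp COND [Proj 1, Comp COND [R, ONE, Comp COND [Comp PRED [R],
      Comp ADD [Proj 0, NUMERAL 2], Zero]], Proj 1]) K
    (\<lambda>ws. if ws ! 1 = 0 then (if r ws = 0 then 1 else if r ws - 1 = 0 then ws ! 0 + 2 else 0)
      else ws ! 1)"
proof (rule computes_Comp3[OF computes_COND[OF refl]])
  have "computes (Comp PRED [R]) K (\<lambda>ws. r ws - 1)"
    by (rule computes_Comp1[OF computes_PRED[OF refl] R]) simp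
  moreover have "computes (Comp ADD [Proj 0, NUMERAL 2]) K (\<lambda>ws. ws ! 0 + 2)"
    by (rule computes_Comp2[OF computes_ADD[OF refl] computes_Proj computes_NUMERAL]) (use K in simp_all)
  ultimately have "computes (Comp COND [Comp PRED [R], Comp ADD [Proj 0, NUMERAL 2], Zero]) K
      (\<lambda>ws. if r ws - 1 = 0 then ws ! 0 + 2 else 0)"
    by (rule computes_Comp3[OF computes_COND[OF refl] _ _ computes_Zero]) simp
  then show "computes (Comp COND [R, ONE, Comp COND [Comp PRED [R], Comp ADD [Proj 0, NUMERAL 2], Zero]]) K
      (\<lambda>ws. if r ws = 0 then 1 else if r ws - 1 = 0 then ws ! 0 + 2 else 0)"
    by (rule computes_Comp3[OF computes_COND[OF refl] R computes_ONE]) simp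
qed (use K in \<open>auto intro: computes_Proj\<close>)

lemma run_computable_Mu:
  assumes f: "run_computable f"
  shows "run_computable (Mu f)"
  unfolding run_computable_def
proof
  fix k
  let ?r = "\<lambda>ws. run_code f (ws ! 2 # ws ! 3 # ws ! 0 # drop 4 ws)"
  obtain Ff where "computes Ff (k + 1 + 2) (run_code f)"
    using f unfolding run_computable_def by blast
  then have "computes Ff (k + 3) (run_code f)" by (simp add: eval_nat_numeral)
  then have "computes (Comp Ff (map Proj ([2, 3, 0] @ [4..<k + 4]))) (k + 4) ?r"
    by (rule computes_cong[OF computes_Comp_Projs]) (simp_all add: map_nth_upt_eq_drop)
  from computes_mu_search_step[OF this] obtain S where S: "computes S (k + 4)
      (\<lambda>ws. if ws ! 1 = 0 then (if ?r ws = 0 then 1 else if ?r ws - 1 = 0 then ws ! 0 + 2 else 0)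
        else ws ! 1)"
    by auto
  have "computes (PrimRec Zero S) (k + 3) (\<lambda>vs. rec_nat 0 (\<lambda>s c.
      if c = 0 then (if ?r (s # c # tl vs) = 0 then 1 else if ?r (s # c # tl vs) - 1 = 0 then s + 2 else 0)
      else c) (vs ! 0))"
    by (rule computes_PrimRec[OF _ computes_Zero]) (use S in \<open>simp add: add.commute cong: if_cong\<close>)+
  then have "computes (Comp (PrimRec Zero S) (map Proj ([0, 0, 1] @ [2..<k + 2]))) (k + 2) (\<lambda>zs. rec_nat 0 (\<lambda>s c.
      if c = 0 then (if ?r (s # c # zs ! 0 # zs ! 1 # drop 2 zs) = 0 then 1
        else if ?r (s # c # zs ! 0 # zs ! 1 # drop 2 zs) - 1 = 0 then s + 2 else 0) else c) (zs ! 0))"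
    by (rule computes_cong[OF computes_Comp_Projs]) (simp_all add: map_nth_upt_eq_drop del: upt_Suc cong: if_cong)
  from computes_Comp1[OF computes_PRED[OF refl] this refl]
  show "\<exists>F. computes F (k + 2) (run_code (Mu f))"
    by (intro exI, rule computes_Cons_Cons_cong) (auto simp: run_code_Mu cong: if_cong)
qed

theorem run_computable: "run_computable f"
proof (induction f)
  case (Comp f gs) then show ?case by (simp add: run_computable_Comp)
qed (simp_all add: run_computable_Zero run_computable_Succ run_computable_Proj run_computable_Orc
  run_computable_PrimRec run_computable_Mu)

section \<open>Computably enumerable sets\<close>

lemma ce_vimage:
  assumes A: "ce A" and H: "computes H 1 (\<lambda>xs. h (xs ! 0))"
  shows "ce {x. h x \<in> A}"
proof -
  obtain e where e: "A = {x. \<exists>y. ev (\<lambda>_. 0) e [x] y}" using A unfolding ce_def by blast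
  have "ev (\<lambda>_. 0) (Comp e [H]) [x] y \<longleftrightarrow> ev (\<lambda>_. 0) e [h x] y" for x y
  proof
    assume "ev (\<lambda>_. 0) (Comp e [H]) [x] y"
    then obtain ys where ys: "list_all2 (\<lambda>g y. ev (\<lambda>_. 0) g [x] y) [H] ys" "ev (\<lambda>_. 0) e ys y"
      by (rule ev_CompE) auto
    then obtain y0 where "ys = [y0]" "ev (\<lambda>_. 0) H [x] y0" by (cases ys) auto
    moreover from this(2) have "y0 = h x" using computes_ev_iff[OF H, of "[x]"] by simp
    ultimately show "ev (\<lambda>_. 0) e [h x] y" using ys by simp
  next
    assume "ev (\<lambda>_. 0) e [h x] y"
    moreover have "list_all2 (\<lambda>g y. ev (\<lambda>_. 0) g [x] y) [H] [h x]"
      using computesD[OF H, of "[x]"] by simp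
    ultimately show "ev (\<lambda>_. 0) (Comp e [H]) [x] y" by (intro ev_Comp)
  qed
  then have "{x. h x \<in> A} = {x. \<exists>y. ev (\<lambda>_. 0) (Comp e [H]) [x] y}" using e by auto
  then show ?thesis unfolding ce_def by blast
qed

lemma ce_zero_set:
  assumes P: "computes P 1 (\<lambda>xs. p (xs ! 0))"
  shows "ce {x. p x = 0}"
proof -
  have P': "computes (Comp P [Proj 1]) 2 (\<lambda>xs. p (xs ! 1))"
    by (rule computes_Comp1[OF P computes_Proj]) simp_all
  have "(\<exists>y. ev (\<lambda>_. 0) (Mu (Comp P [Proj 1])) [x] y) \<longleftrightarrow> p x = 0" for x
  proof
    assume "\<exists>y. ev (\<lambda>_. 0) (Mu (Comp P [Proj 1])) [x] y"
    then obtain y where "ev (\<lambda>_. 0) (Mu (Comp P [Proj 1])) [x] y" by blast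
    then have "ev (\<lambda>_. 0) (Comp P [Proj 1]) [y, x] 0" by (rule ev_MuE) simp
    then show "p x = 0" using computes_ev_iff[OF P', of "[y, x]"] by simp
  next
    assume "p x = 0"
    then have "ev (\<lambda>_. 0) (Comp P [Proj 1]) [0, x] 0" using computesD[OF P', of "[0, x]"] by simp
    then show "\<exists>y. ev (\<lambda>_. 0) (Mu (Comp P [Proj 1])) [x] y" by (auto intro: ev_Mu)
  qed
  then show ?thesis unfolding ce_def by (intro exI[of _ "Mu (Comp P [Proj 1])"]) auto
qed

definition search_defect :: "recf \<Rightarrow> nat \<Rightarrow> nat \<Rightarrow> nat \<Rightarrow> nat" where
  "search_defect \<Psi> a c j = (let r = run_code \<Psi> [snd (prod_decode c), fst (prod_decode c), a] in
     (j - fst (prod_decode c)) + ((r - 2) + (2 - r)))"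

lemma search_defect_eq_0_iff:
  "search_defect \<Psi> a c j = 0 \<longleftrightarrow>
     j \<le> fst (prod_decode c) \<and> clocked_run (chi (fst (prod_decode c))) (snd (prod_decode c)) \<Psi> [a] = Some 1"
  by (auto simp: search_defect_def run_code_Cons_Cons option_code_def split: option.splits)

lemma computes_search_defect: "\<exists>Q. computes Q 2 (\<lambda>xs. search_defect \<Psi> a (xs ! 0) (xs ! 1))"
proof -
  obtain FP where "computes FP (1 + 2) (run_code \<Psi>)"
    using run_computable unfolding run_computable_def by blast
  then have FP: "computes FP 3 (run_code \<Psi>)" by (simp add: numeral_3_eq_3)
  let ?r = "\<lambda>c. run_code \<Psi> [snd (prod_decode c), fst (prod_decode c), a]"
  define A where "A = Comp FP [Comp SND [Proj 0], Comp FST [Proj 0], NUMERAL a]"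
  have A: "computes A 2 (\<lambda>xs. ?r (xs ! 0))"
    unfolding A_def
    by (rule computes_Comp3[OF FP] computes_Comp1[OF computes_SND[OF refl]]
        computes_Comp1[OF computes_FST[OF refl]] computes_Proj computes_NUMERAL | simp)+
  have "computes (Comp ADD [Comp MONUS [Proj 1, Comp FST [Proj 0]],
      Comp ADD [Comp MONUS [A, NUMERAL 2], Comp MONUS [NUMERAL 2, A]]]) 2
    (\<lambda>xs. search_defect \<Psi> a (xs ! 0) (xs ! 1))"
    unfolding search_defect_def Let_def
    by (rule computes_Comp2[OF computes_ADD[OF refl]] computes_Comp2[OF computes_MONUS[OF refl]]
        computes_Comp1[OF computes_FST[OF refl]] computes_Proj computes_NUMERAL A | simp)+
  then show ?thesis by blast
qed

lemma computable_search_above: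
  assumes unbounded: "\<And>j. \<exists>n\<ge>j. ev (chi n) \<Psi> [a] 1"
  shows "\<exists>G g. computes G 1 (\<lambda>xs. g (xs ! 0)) \<and> (\<forall>j. j \<le> g j \<and> ev (chi (g j)) \<Psi> [a] 1)"
proof -
  obtain Q where Q: "computes Q 2 (\<lambda>xs. search_defect \<Psi> a (xs ! 0) (xs ! 1))"
    using computes_search_defect by blast
  have found: "\<exists>c. search_defect \<Psi> a c j = 0" for j
  proof -
    obtain n where n: "j \<le> n" "ev (chi n) \<Psi> [a] 1" using unbounded by blast
    then obtain t where "clocked_run (chi n) t \<Psi> [a] = Some 1" using clocked_run_if_ev by blast
    then show ?thesis using n(1) by (intro exI[of _ "prod_encode (n, t)"]) (simp add: search_defect_eq_0_iff)
  qed
  let ?c = "\<lambda>j. LEAST c. search_defect \<Psi> a c j = 0"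
  have "computes (Mu Q) 1 (\<lambda>xs. ?c (xs ! 0))"
  proof (rule computes_Mu)
    show "computes Q (Suc 1) (\<lambda>xs. search_defect \<Psi> a (xs ! 0) (xs ! 1))"
      using Q by (simp add: numeral_2_eq_2)
  qed (use found in simp_all)
  then have G: "computes (Comp FST [Mu Q]) 1 (\<lambda>xs. fst (prod_decode (?c (xs ! 0))))"
    by (rule computes_Comp1[OF computes_FST[OF refl]]) simp
  have "search_defect \<Psi> a (?c j) j = 0" for j by (rule LeastI_ex, rule found)
  then have "j \<le> fst (prod_decode (?c j)) \<and> ev (chi (fst (prod_decode (?c j)))) \<Psi> [a] 1" for j
    by (auto simp: search_defect_eq_0_iff intro: ev_if_clocked_run)
  with G show ?thesis by (intro exI[of _ "Comp FST [Mu Q]"] exI[of _ "\<lambda>j. fst (prod_decode (?c j))"]) simp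
qed

section \<open>Cylinders in Cantor space\<close>

abbreviation coin :: "nat \<Rightarrow> bool measure" where
  "coin \<equiv> \<lambda>_. measure_pmf (bernoulli_pmf (1/2))"

lemma product_prob_space_coin: "product_prob_space coin"
  unfolding product_prob_space_def product_prob_space_axioms_def product_sigma_finite_def
  by (auto intro: prob_space_measure_pmf prob_space_imp_sigma_finite)

lemma space_cantor_lambda: "space cantor_lambda = UNIV"
  unfolding cantor_lambda_def by (simp add: space_PiM PiE_UNIV_domain)

lemma prob_space_cantor_lambda: "prob_space cantor_lambda"
  unfolding cantor_lambda_def by (rule prob_space_PiM) (rule prob_space_measure_pmf)

lemma cyl_eq_prod_emb:
  "cyl \<sigma> = prod_emb UNIV coin {..<length \<sigma>} (Pi\<^sub>E {..<length \<sigma>} (\<lambda>i. {\<sigma> ! i}))"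
proof -
  have "x \<in> cyl \<sigma> \<longleftrightarrow> x \<in> prod_emb UNIV coin {..<length \<sigma>} (Pi\<^sub>E {..<length \<sigma>} (\<lambda>i. {\<sigma> ! i}))" for x
    unfolding cyl_def prod_emb_iff by (simp add: PiE_iff Ball_def)
  then show ?thesis by blast
qed

lemma cyl_in_sets: "cyl \<sigma> \<in> sets cantor_lambda"
  unfolding cyl_eq_prod_emb cantor_lambda_def by (rule sets_PiM_I) simp_all

lemma emeasure_cyl: "emeasure cantor_lambda (cyl \<sigma>) = ennreal ((1/2) ^ length \<sigma>)"
proof -
  have "emeasure cantor_lambda (cyl \<sigma>) = (\<Prod>i\<in>{..<length \<sigma>}. emeasure (coin i) {\<sigma> ! i})"
    unfolding cyl_eq_prod_emb cantor_lambda_def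
    by (rule product_prob_space.emeasure_PiM_emb[OF product_prob_space_coin]) simp_all
  also have "\<dots> = (\<Prod>i\<in>{..<length \<sigma>}. ennreal (1/2))"
    by (intro prod.cong refl) (simp add: emeasure_pmf_single)
  also have "\<dots> = ennreal (1/2) ^ length \<sigma>" by simp
  also have "\<dots> = ennreal ((1/2) ^ length \<sigma>)" by (rule ennreal_power) simp
  finally show ?thesis .
qed

lemma cantor_open_in_sets:
  assumes "cantor_open V" shows "V \<in> sets cantor_lambda"
proof -
  have "V = (\<Union>\<sigma>\<in>{\<sigma>. cyl \<sigma> \<subseteq> V}. cyl \<sigma>)" using assms unfolding cantor_open_def by blast
  also have "\<dots> \<in> sets cantor_lambda"
    by (rule sets.countable_UN'') (simp_all add: cyl_in_sets)
  finally show ?thesis .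
qed

lemma cantor_open_cyl: "cantor_open (cyl \<tau>)"
  unfolding cantor_open_def by blast

lemma cyl_subset_cyl_iff:
  "cyl \<sigma> \<subseteq> cyl \<tau> \<longleftrightarrow> length \<tau> \<le> length \<sigma> \<and> (\<forall>j<length \<tau>. \<sigma> ! j = \<tau> ! j)"
proof
  assume sub: "cyl \<sigma> \<subseteq> cyl \<tau>"
  text \<open>Extend \<sigma> by the complement of \<tau>, so that \<tau> cannot be longer than \<sigma>.\<close>
  define X where "X = (\<lambda>j. if j < length \<sigma> then \<sigma> ! j else j < length \<tau> \<and> \<not> \<tau> ! j)"
  have "X \<in> cyl \<sigma>" unfolding cyl_def X_def by simp
  then have X: "\<forall>j<length \<tau>. X j = \<tau> ! j" using sub unfolding cyl_def by blast
  have "length \<tau> \<le> length \<sigma>"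
  proof (rule ccontr)
    assume "\<not> ?thesis"
    then show False using X[rule_format, of "length \<sigma>"] unfolding X_def by simp
  qed
  moreover have "\<forall>j<length \<tau>. \<sigma> ! j = \<tau> ! j" using X calculation unfolding X_def by auto
  ultimately show "length \<tau> \<le> length \<sigma> \<and> (\<forall>j<length \<tau>. \<sigma> ! j = \<tau> ! j)" by blast
next
  assume "length \<tau> \<le> length \<sigma> \<and> (\<forall>j<length \<tau>. \<sigma> ! j = \<tau> ! j)"
  then show "cyl \<sigma> \<subseteq> cyl \<tau>" unfolding cyl_def by auto
qed

section \<open>Deciding cylinders inside the cylinders of zero strings\<close>

definition code_hd :: "nat \<Rightarrow> nat" where "code_hd s = fst (prod_decode (s - 1))"
definition code_tl :: "nat \<Rightarrow> nat" where "code_tl s = snd (prod_decode (s - 1))"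
definition code_drop :: "nat \<Rightarrow> nat \<Rightarrow> nat" where "code_drop s k = (code_tl ^^ k) s"

lemma list_decode_code: "list_decode s = (if s = 0 then [] else code_hd s # list_decode (code_tl s))"
  by (cases s) (auto simp: code_hd_def code_tl_def split: prod.splits)

lemma code_drop_0 [simp]: "code_drop 0 k = 0"
  by (induction k) (auto simp: code_drop_def code_tl_def prod_decode_def prod_decode_aux.simps)

lemma nth_list_decode:
  "(k < length (list_decode s) \<longleftrightarrow> code_drop s k \<noteq> 0) \<and>
   (k < length (list_decode s) \<longrightarrow> list_decode s ! k = code_hd (code_drop s k))"
proof (induction k arbitrary: s)
  case 0
  show ?case
  proof (cases "s = 0")
    case False
    then have "list_decode s = code_hd s # list_decode (code_tl s)" by (subst list_decode_code) simp
    then show ?thesis using False by (simp add: code_drop_def)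
  qed (simp add: code_drop_def)
next
  case (Suc k)
  have drop: "code_drop s (Suc k) = code_drop (code_tl s) k"
    unfolding code_drop_def funpow_Suc_right by simp
  show ?case
  proof (cases "s = 0")
    case False
    then have "list_decode s = code_hd s # list_decode (code_tl s)" by (subst list_decode_code) simp
    then show ?thesis using Suc[of "code_tl s"] drop by simp
  qed simp
qed

lemma length_list_decode_le: "length (list_decode s) \<le> s"
proof (induction s rule: list_decode.induct)
  case (2 n)
  obtain x y where p: "prod_decode n = (x, y)" by fastforce
  then have "y \<le> n" by (metis le_prod_encode_2 prod_decode_inverse)
  then show ?case using 2[OF p[symmetric]] p by simp
qed simp

definition nonbit_at :: "nat \<Rightarrow> nat \<Rightarrow> nat" where
  "nonbit_at s k = (if code_drop s k = 0 then 0 else 1) * (if code_hd (code_drop s k) - 1 = 0 then 0 else 1)"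

definition nonzero_at :: "nat \<Rightarrow> nat \<Rightarrow> nat" where
  "nonzero_at s k = (if code_drop s k = 0 then 1 else 0) + (if code_hd (code_drop s k) = 0 then 0 else 1)"

lemma sum_nonbit_at_eq_0_iff: "(\<Sum>k<s. nonbit_at s k) = 0 \<longleftrightarrow> (\<forall>v\<in>set (list_decode s). v \<le> 1)"
proof -
  let ?L = "list_decode s"
  have "nonbit_at s k = 0 \<longleftrightarrow> (k < length ?L \<longrightarrow> ?L ! k \<le> 1)" for k
    using nth_list_decode[of k s] by (auto simp: nonbit_at_def)
  then have "(\<Sum>k<s. nonbit_at s k) = 0 \<longleftrightarrow> (\<forall>k<s. k < length ?L \<longrightarrow> ?L ! k \<le> 1)"
    by auto
  also have "\<dots> \<longleftrightarrow> (\<forall>k<length ?L. ?L ! k \<le> 1)"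
    using length_list_decode_le[of s] by (auto dest: less_le_trans)
  finally show ?thesis by (simp add: all_set_conv_all_nth)
qed

lemma sum_nonzero_at_eq_0_iff:
  "(\<Sum>k<i. nonzero_at s k) = 0 \<longleftrightarrow> i \<le> length (list_decode s) \<and> (\<forall>j<i. list_decode s ! j = 0)"
proof -
  let ?L = "list_decode s"
  have "nonzero_at s k = 0 \<longleftrightarrow> k < length ?L \<and> ?L ! k = 0" for k
    using nth_list_decode[of k s] by (auto simp: nonzero_at_def)
  then have "(\<Sum>k<i. nonzero_at s k) = 0 \<longleftrightarrow> (\<forall>k<i. k < length ?L \<and> ?L ! k = 0)"
    by auto
  also have "\<dots> \<longleftrightarrow> i \<le> length ?L \<and> (\<forall>j<i. ?L ! j = 0)"
  proof
    assume H: "\<forall>k<i. k < length ?L \<and> ?L ! k = 0"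
    have "i \<le> length ?L"
    proof (rule ccontr)
      assume "\<not> i \<le> length ?L"
      with H show False by (metis less_irrefl not_le)
    qed
    with H show "i \<le> length ?L \<and> (\<forall>j<i. ?L ! j = 0)" by blast
  qed auto
  finally show ?thesis .
qed

definition zero_prefix_defect :: "nat \<Rightarrow> nat" where
  "zero_prefix_defect x = (\<Sum>k<snd (prod_decode x). nonbit_at (snd (prod_decode x)) k)
     + (\<Sum>k<fst (prod_decode x). nonzero_at (snd (prod_decode x)) k)"

lemma zero_prefix_cylinder_codes:
  "{prod_encode (i, str_code \<sigma>) | i \<sigma>. cyl \<sigma> \<subseteq> cyl (replicate i False)} = {x. zero_prefix_defect x = 0}"
proof (intro set_eqI iffI)
  fix x assume "x \<in> {prod_encode (i, str_code \<sigma>) | i \<sigma>. cyl \<sigma> \<subseteq> cyl (replicate i False)}"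
  then show "x \<in> {x. zero_prefix_defect x = 0}"
    by (auto simp: zero_prefix_defect_def str_code_def cyl_subset_cyl_iff sum_nonbit_at_eq_0_iff
        sum_nonzero_at_eq_0_iff)
next
  fix x assume "x \<in> {x. zero_prefix_defect x = 0}"
  obtain i s where dec: "prod_decode x = (i, s)" by fastforce
  then have x: "x = prod_encode (i, s)" by (metis prod_decode_inverse)
  have bits: "\<forall>v\<in>set (list_decode s). v \<le> 1"
    and zeros: "i \<le> length (list_decode s)" "\<forall>j<i. list_decode s ! j = 0"
    using \<open>x \<in> {x. zero_prefix_defect x = 0}\<close> dec
    by (simp_all add: zero_prefix_defect_def sum_nonbit_at_eq_0_iff sum_nonzero_at_eq_0_iff)
  define \<sigma> where "\<sigma> = map (\<lambda>v. v = 1) (list_decode s)"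
  have "map of_bool \<sigma> = list_decode s" unfolding \<sigma>_def map_map using bits by (intro map_idI) auto
  then have "str_code \<sigma> = s" unfolding str_code_def by simp
  moreover have "cyl \<sigma> \<subseteq> cyl (replicate i False)"
    unfolding cyl_subset_cyl_iff \<sigma>_def using zeros by auto
  ultimately show "x \<in> {prod_encode (i, str_code \<sigma>) | i \<sigma>. cyl \<sigma> \<subseteq> cyl (replicate i False)}"
    using x by blast
qed

definition TL :: recf where "TL = Comp SND [Comp PRED [Proj 0]]"

lemma computes_TL: "computes TL 1 (\<lambda>xs. code_tl (xs ! 0))"
  unfolding TL_def code_tl_def
  by (rule computes_Comp1[OF computes_SND[OF refl] computes_Comp1[OF computes_PRED[OF refl] computes_Proj]])
    simp_all

definition HD :: recf where "HD = Comp FST [Comp PRED [Proj 0]]"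

lemma computes_HD: "computes HD 1 (\<lambda>xs. code_hd (xs ! 0))"
  unfolding HD_def code_hd_def
  by (rule computes_Comp1[OF computes_FST[OF refl] computes_Comp1[OF computes_PRED[OF refl] computes_Proj]])
    simp_all

lemma rec_nat_code_tl: "rec_nat s (\<lambda>m r. code_tl r) k = code_drop s k"
  by (induction k) (simp_all add: code_drop_def)

definition DROP :: recf where "DROP = PrimRec (Proj 0) (Comp TL [Proj 1])"

lemma computes_DROP: "2 \<le> K \<Longrightarrow> computes (Comp DROP [Proj 0, Proj 1]) K (\<lambda>xs. code_drop (xs ! 1) (xs ! 0))"
proof (rule computes_Comp2[OF _ computes_Proj computes_Proj])
  show "computes DROP 2 (\<lambda>xs. code_drop (xs ! 1) (xs ! 0))"
    unfolding DROP_def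
  proof (rule computes_PrimRec)
    show "computes (Comp TL [Proj 1]) (2 + 1) (\<lambda>xs. code_tl (xs ! 1))"
      by (rule computes_Comp1[OF computes_TL computes_Proj]) simp_all
    show "code_drop (xs ! 1) (xs ! 0) = rec_nat (tl xs ! 0) (\<lambda>m r. code_tl ((m # r # tl xs) ! 1)) (xs ! 0)"
      if "length xs = 2" for xs
      using that by (cases xs; cases "tl xs") (auto simp: rec_nat_code_tl)
  qed (simp_all add: computes_Proj)
qed simp_all

definition NONBIT :: recf where
  "NONBIT = Comp MULT [Comp SG [Comp DROP [Proj 0, Proj 1]],
     Comp SG [Comp MONUS [Comp HD [Comp DROP [Proj 0, Proj 1]], ONE]]]"

lemma computes_NONBIT: "computes NONBIT 3 (\<lambda>xs. nonbit_at (xs ! 1) (xs ! 0))"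
  unfolding NONBIT_def nonbit_at_def
  by (rule computes_Comp2[OF computes_MULT[OF refl]] computes_Comp1[OF computes_SG[OF refl]]
      computes_Comp2[OF computes_MONUS[OF refl]] computes_Comp1[OF computes_HD] computes_DROP
      computes_ONE | simp)+

definition NONZERO :: recf where
  "NONZERO = Comp ADD [Comp NSG [Comp DROP [Proj 0, Proj 1]], Comp SG [Comp HD [Comp DROP [Proj 0, Proj 1]]]]"

lemma computes_NONZERO: "computes NONZERO 3 (\<lambda>xs. nonzero_at (xs ! 1) (xs ! 0))"
  unfolding NONZERO_def nonzero_at_def
  by (rule computes_Comp2[OF computes_ADD[OF refl]] computes_Comp1[OF computes_SG[OF refl]]
      computes_Comp1[OF computes_NSG[OF refl]] computes_Comp1[OF computes_HD] computes_DROP | simp)+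

definition BSUM :: "recf \<Rightarrow> recf" where
  "BSUM B = PrimRec Zero (Comp ADD [Proj 1, Comp B [Proj 0, Proj 2, Proj 3]])"

lemma rec_nat_eq_sum: "rec_nat 0 (\<lambda>k r. r + b k) n = (\<Sum>k<n. b k :: nat)"
  by (induction n) auto

lemma computes_BSUM:
  assumes B: "computes B 3 (\<lambda>xs. b (xs ! 1) (xs ! 0))"
  shows "computes (BSUM B) 3 (\<lambda>xs. \<Sum>k<xs ! 0. b (xs ! 1) k)"
  unfolding BSUM_def
proof (rule computes_PrimRec[OF _ computes_Zero])
  show "computes (Comp ADD [Proj 1, Comp B [Proj 0, Proj 2, Proj 3]]) (3 + 1)
      (\<lambda>xs. xs ! 1 + b (xs ! 2) (xs ! 0))"
    by (rule computes_Comp2[OF computes_ADD[OF refl] computes_Proj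
        computes_Comp3[OF B computes_Proj computes_Proj computes_Proj]]) simp_all
  show "(\<Sum>k<xs ! 0. b (xs ! 1) k) = rec_nat 0 (\<lambda>m r. (m # r # tl xs) ! 1
      + b ((m # r # tl xs) ! 2) ((m # r # tl xs) ! 0)) (xs ! 0)" if "length xs = 3" for xs
    using that by (cases xs; cases "tl xs") (auto simp: rec_nat_eq_sum[symmetric] add.commute)
qed simp

definition DEFECT :: recf where
  "DEFECT = Comp ADD [Comp (BSUM NONBIT) [SND, SND, FST], Comp (BSUM NONZERO) [FST, SND, FST]]"

lemma computes_DEFECT: "computes DEFECT 1 (\<lambda>xs. zero_prefix_defect (xs ! 0))"
  unfolding DEFECT_def zero_prefix_defect_def
  by (rule computes_Comp2[OF computes_ADD[OF refl]]
      computes_Comp3[OF computes_BSUM[OF computes_NONBIT]] computes_Comp3[OF computes_BSUM[OF computes_NONZERO]]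
      computes_SND[OF refl] computes_FST[OF refl] | simp)+

lemma ce_zero_prefix_cylinder_codes:
  "ce {prod_encode (i, str_code \<sigma>) | i \<sigma>. cyl \<sigma> \<subseteq> cyl (replicate i False)}"
  unfolding zero_prefix_cylinder_codes by (rule ce_zero_set[OF computes_DEFECT])

section \<open>Martin-Loef tests\<close>

lemma MLR_iff_universal:
  assumes "universal_MLtest U" shows "X \<in> MLR \<longleftrightarrow> (\<exists>i. X \<notin> U i)"
  using assms unfolding universal_MLtest_def MLR_def by blast

lemma MLtest_emeasure_le: "MLtest U \<Longrightarrow> emeasure cantor_lambda (U i) \<le> ennreal ((1/2) ^ i)"
  unfolding MLtest_def by blast

lemma MLtest_in_sets: "MLtest U \<Longrightarrow> U i \<in> sets cantor_lambda"
  unfolding MLtest_def using cantor_open_in_sets by blast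

definition MAPFST :: "recf \<Rightarrow> recf" where "MAPFST G = Comp PE [Comp G [FST], SND]"

lemma computes_MAPFST:
  "computes G 1 (\<lambda>xs. g (xs ! 0)) \<Longrightarrow>
   computes (MAPFST G) 1 (\<lambda>xs. prod_encode (g (fst (prod_decode (xs ! 0))), snd (prod_decode (xs ! 0))))"
  unfolding MAPFST_def
  by (rule computes_Comp2[OF computes_PE[OF refl] computes_Comp1[OF _ computes_FST[OF refl]]
      computes_SND[OF refl]]) (assumption | simp)+

lemma MLtest_reindex:
  assumes U: "MLtest U" and G: "computes G 1 (\<lambda>xs. g (xs ! 0))" and ge: "\<And>j. j \<le> g j"
  shows "MLtest (\<lambda>j. U (g j))"
  unfolding MLtest_def
proof (intro conjI allI)
  show "cantor_open (U (g i))" for i using U unfolding MLtest_def by blast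
  show "emeasure cantor_lambda (U (g i)) \<le> ennreal ((1 / 2) ^ i)" for i
  proof -
    have "emeasure cantor_lambda (U (g i)) \<le> ennreal ((1 / 2) ^ g i)" by (rule MLtest_emeasure_le[OF U])
    also have "\<dots> \<le> ennreal ((1 / 2) ^ i)" using ge[of i] by (intro ennreal_leI power_decreasing) auto
    finally show ?thesis .
  qed
  let ?C = "{prod_encode (i, str_code \<sigma>) | i \<sigma>. cyl \<sigma> \<subseteq> U i}"
  let ?h = "\<lambda>x. prod_encode (g (fst (prod_decode x)), snd (prod_decode x))"
  have ceC: "ce ?C" using U unfolding MLtest_def by blast
  have "{prod_encode (i, str_code \<sigma>) | i \<sigma>. cyl \<sigma> \<subseteq> U (g i)} = {x. ?h x \<in> ?C}"
  proof (intro set_eqI iffI)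
    fix x assume "x \<in> {x. ?h x \<in> ?C}"
    then obtain i \<sigma> where e: "?h x = prod_encode (i, str_code \<sigma>)" "cyl \<sigma> \<subseteq> U i" by auto
    then have "i = g (fst (prod_decode x))" "snd (prod_decode x) = str_code \<sigma>" by auto
    moreover have "x = prod_encode (fst (prod_decode x), snd (prod_decode x))" by simp
    ultimately show "x \<in> {prod_encode (i, str_code \<sigma>) | i \<sigma>. cyl \<sigma> \<subseteq> U (g i)}"
      using e(2) by (intro CollectI exI[of _ "fst (prod_decode x)"] exI[of _ \<sigma>]) auto
  qed auto
  then show "ce {prod_encode (i, str_code \<sigma>) | i \<sigma>. cyl \<sigma> \<subseteq> U (g i)}"
    using ce_vimage[OF ceC computes_MAPFST[OF G]] by simp
qed

lemma MLR_nonempty: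
  assumes "universal_MLtest U" shows "\<exists>X. X \<in> MLR"
proof (rule ccontr)
  assume "\<nexists>X. X \<in> MLR"
  then have "U 1 = UNIV" using MLR_iff_universal[OF assms] by blast
  then have "emeasure cantor_lambda (U 1) = 1"
    using prob_space.emeasure_space_1[OF prob_space_cantor_lambda] space_cantor_lambda by simp
  moreover have "emeasure cantor_lambda (U 1) \<le> ennreal (1/2)"
    using MLtest_emeasure_le[of U 1] assms unfolding universal_MLtest_def by simp
  ultimately show False by (simp add: ennreal_le_iff2 del: ennreal_half)
qed

text \<open>The tail of a test is a test.\<close>
lemma LAY_unbounded:
  assumes U: "universal_MLtest U" and Y: "Y \<in> MLR"
  shows "\<exists>i\<ge>k. Y \<notin> U i"
proof (rule ccontr)
  assume "\<not> ?thesis"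
  then have "Y \<in> (\<Inter>j. U (j + k))" by auto
  moreover have "computes (Comp ADD [Proj 0, NUMERAL k]) 1 (\<lambda>xs. xs ! 0 + k)"
    by (rule computes_Comp2[OF computes_ADD[OF refl] computes_Proj computes_NUMERAL]) simp_all
  then have "MLtest (\<lambda>j. U (j + k))"
    by (rule MLtest_reindex[rotated]) (use U in \<open>simp_all add: universal_MLtest_def\<close>)
  ultimately show False using Y unfolding MLR_def by blast
qed

lemma MLtest_zero_prefix: "MLtest (\<lambda>i. cyl (replicate i False))"
  unfolding MLtest_def
  by (simp add: cantor_open_cyl ce_zero_prefix_cylinder_codes emeasure_cyl del: ennreal_half)

text \<open>The zero sequence lies in every level of V, so V a contains a cylinder; if all its
  elements were nonrandom, that cylinder would have measure at most that of any level of U.\<close>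
lemma MLR_meets_universal_level:
  assumes U: "universal_MLtest U" and V: "universal_MLtest V"
  shows "\<exists>X\<in>MLR. X \<in> V a"
proof -
  have "(\<lambda>_. False) \<in> (\<Inter>i. cyl (replicate i False))" by (auto simp: cyl_def)
  then have "(\<lambda>_. False) \<in> V a" using V MLtest_zero_prefix unfolding universal_MLtest_def by blast
  moreover have "cantor_open (V a)" using V unfolding universal_MLtest_def MLtest_def by blast
  ultimately obtain \<sigma> where \<sigma>: "cyl \<sigma> \<subseteq> V a" unfolding cantor_open_def by blast
  show ?thesis
  proof (rule ccontr)
    assume "\<not> ?thesis"
    then have sub: "cyl \<sigma> \<subseteq> U i" for i using \<sigma> MLR_iff_universal[OF U] by blast
    have UT: "MLtest U" using U unfolding universal_MLtest_def by blast
    let ?i = "Suc (length \<sigma>)"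
    have "ennreal ((1/2) ^ length \<sigma>) = emeasure cantor_lambda (cyl \<sigma>)" by (simp add: emeasure_cyl)
    also have "\<dots> \<le> emeasure cantor_lambda (U ?i)" by (rule emeasure_mono[OF sub MLtest_in_sets[OF UT]])
    also have "\<dots> \<le> ennreal ((1/2) ^ ?i)" by (rule MLtest_emeasure_le[OF UT])
    finally have "(1/2::real) ^ length \<sigma> \<le> (1/2) ^ ?i" by (simp add: ennreal_le_iff del: ennreal_half)
    moreover have "(1/2::real) ^ ?i < (1/2) ^ length \<sigma>" by (rule power_strict_decreasing) auto
    ultimately show False by linarith
  qed
qed

section \<open>Representations and realizers\<close>

lemma delta_nat_chi: "delta_nat (chi n) = Some n"
proof -
  have "chi n = chi m \<Longrightarrow> m = n" for m by (metis chi_def one_neq_zero)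
  then have "(THE m. chi n = chi m) = n" by blast
  then show ?thesis unfolding delta_nat_def by auto
qed

lemma delta_nat_SomeD: "delta_nat q = Some y \<Longrightarrow> q = chi y"
  unfolding delta_nat_def by (auto split: if_splits) (metis delta_nat_chi delta_nat_def option.inject)

lemma delta_MLR_of_bool: "X \<in> MLR \<Longrightarrow> delta_MLR (\<lambda>n. of_bool (X n)) = Some X"
  unfolding delta_MLR_def by auto

lemma delta_MLR_SomeD: "delta_MLR q = Some Y \<Longrightarrow> Y \<in> MLR"
  unfolding delta_MLR_def by (auto split: if_splits)

lemma tfun_SomeD: assumes "tfun \<Psi> p = Some r" shows "ev p \<Psi> [m] y \<longleftrightarrow> y = r m"
proof -
  have tot: "\<forall>n. \<exists>y. ev p \<Psi> [n] y" and r: "r = (\<lambda>n. THE y. ev p \<Psi> [n] y)"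
    using assms unfolding tfun_def by (auto split: if_splits)
  obtain y0 where y0: "ev p \<Psi> [m] y0" using tot by blast
  then have "(THE y. ev p \<Psi> [m] y) = y0" using ev_deterministic by blast
  then show ?thesis using y0 ev_deterministic r by auto
qed

definition least_layer_realizer :: "(nat \<Rightarrow> (nat \<Rightarrow> bool) set) \<Rightarrow> (nat \<Rightarrow> nat) \<Rightarrow> (nat \<Rightarrow> nat) option" where
  "least_layer_realizer U q = map_option (\<lambda>Y. chi (LEAST i. Y \<notin> U i)) (delta_MLR q)"

lemma realizes_least_layer:
  assumes "universal_MLtest U"
  shows "realizes delta_MLR delta_nat (LAY U) (least_layer_realizer U)"
proof -
  have "Y \<notin> U (LEAST i. Y \<notin> U i)" if "Y \<in> MLR" for Y
    using that MLR_iff_universal[OF assms] by (metis LeastI_ex)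
  then show ?thesis
    unfolding realizes_def least_layer_realizer_def LAY_def
    using delta_MLR_SomeD delta_nat_chi by auto
qed

text \<open>Realizers may answer with any layer, and changing the answer on the single name
  \<Phi>(X) is again a realizer; so \<Psi> maps the name of every layer of \<Phi>(X) to rd_V(X).\<close>
lemma sW_reduction_on_layers:
  assumes U: "universal_MLtest U" and X: "X \<in> MLR"
    and H: "\<And>\<Gamma>. realizes delta_MLR delta_nat (LAY U) \<Gamma> \<Longrightarrow>
      realizes delta_MLR delta_nat (RD V) (\<lambda>p. Option.bind (tfun \<Phi> p) (\<lambda>q. Option.bind (\<Gamma> q) (tfun \<Psi>)))"
  shows "\<exists>Y\<in>MLR. \<forall>n. Y \<notin> U n \<longrightarrow> tfun \<Psi> (chi n) = Some (chi (LEAST i. X \<notin> V i))"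
proof -
  let ?p = "\<lambda>n. of_bool (X n) :: nat" and ?\<Gamma> = "least_layer_realizer U"
  have p: "delta_MLR ?p = Some X" by (rule delta_MLR_of_bool[OF X])
  from H[OF realizes_least_layer[OF U]] p obtain q
    where "Option.bind (tfun \<Phi> ?p) (\<lambda>q. Option.bind (?\<Gamma> q) (tfun \<Psi>)) = Some q"
    unfolding realizes_def by blast
  then obtain q0 r where q0: "tfun \<Phi> ?p = Some q0" and "?\<Gamma> q0 = Some r"
    by (auto simp: bind_eq_Some_conv)
  then obtain Y where Y: "delta_MLR q0 = Some Y"
    unfolding least_layer_realizer_def by auto
  have "tfun \<Psi> (chi n) = Some (chi (LEAST i. X \<notin> V i))" if n: "Y \<notin> U n" for n
  proof -
    have "realizes delta_MLR delta_nat (LAY U) (?\<Gamma>(q0 := Some (chi n)))"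
      using realizes_least_layer[OF U] n Y delta_nat_chi unfolding realizes_def LAY_def by auto
    from H[OF this] p obtain q' y where
      e: "Option.bind (tfun \<Phi> ?p) (\<lambda>q. Option.bind ((?\<Gamma>(q0 := Some (chi n))) q) (tfun \<Psi>)) = Some q'"
      and "delta_nat q' = Some y" and "y \<in> RD V X"
      unfolding realizes_def by blast
    then have "q' = chi (LEAST i. X \<notin> V i)" by (auto simp: RD_def dest: delta_nat_SomeD)
    then show ?thesis using e q0 by simp
  qed
  then show ?thesis using delta_MLR_SomeD[OF Y] by blast
qed

lemma answer_forced_by_test:
  assumes W: "MLtest (\<lambda>j. U (g j))" and Y: "Y \<in> MLR"
    and answers: "\<forall>n. Y \<notin> U n \<longrightarrow> tfun \<Psi> (chi n) = Some (chi b)"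
    and one: "\<And>j. ev (chi (g j)) \<Psi> [a] 1"
  shows "b = a"
proof -
  obtain j where "Y \<notin> U (g j)" using W Y unfolding MLR_def by blast
  then have "tfun \<Psi> (chi (g j)) = Some (chi b)" using answers by blast
  then have "chi b a = 1" using one[of j] tfun_SomeD by metis
  then show ?thesis by (simp add: chi_def split: if_splits)
qed

lemma answers_one_unboundedly:
  assumes U: "universal_MLtest U" and Y: "Y \<in> MLR"
    and answers: "\<forall>n. Y \<notin> U n \<longrightarrow> tfun \<Psi> (chi n) = Some (chi a)"
  shows "\<exists>n\<ge>j. ev (chi n) \<Psi> [a] 1"
proof -
  obtain n where "j \<le> n" "Y \<notin> U n" using LAY_unbounded[OF U Y] by blast
  then have "ev (chi n) \<Psi> [a] (chi a a)" using answers tfun_SomeD by blast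
  then show ?thesis using \<open>j \<le> n\<close> by (auto simp: chi_def)
qed

theorem proposition5p5:
  assumes "universal_MLtest U" and "universal_MLtest V"
  shows "\<not> sW_le delta_MLR delta_nat (RD V) delta_MLR delta_nat (LAY U)"
proof
  assume "sW_le delta_MLR delta_nat (RD V) delta_MLR delta_nat (LAY U)"
  then obtain \<Phi> \<Psi> where H: "\<And>\<Gamma>. realizes delta_MLR delta_nat (LAY U) \<Gamma> \<Longrightarrow>
      realizes delta_MLR delta_nat (RD V) (\<lambda>p. Option.bind (tfun \<Phi> p) (\<lambda>q. Option.bind (\<Gamma> q) (tfun \<Psi>)))"
    unfolding sW_le_def by blast
  note layers = sW_reduction_on_layers[OF assms(1) _ H]
  define rd where "rd X = (LEAST i. X \<notin> V i)" for X
  obtain X0 where "X0 \<in> MLR" using MLR_nonempty[OF assms(1)] by blast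
  then obtain Y0 where Y0: "Y0 \<in> MLR" "\<forall>n. Y0 \<notin> U n \<longrightarrow> tfun \<Psi> (chi n) = Some (chi (rd X0))"
    using layers unfolding rd_def by blast
  from computable_search_above[OF answers_one_unboundedly[OF assms(1) Y0]]
  obtain G g where G: "computes G 1 (\<lambda>xs. g (xs ! 0))" and g: "\<forall>j. j \<le> g j \<and> ev (chi (g j)) \<Psi> [rd X0] 1"
    by blast
  have W: "MLtest (\<lambda>j. U (g j))"
    by (rule MLtest_reindex[OF _ G]) (use assms(1) g in \<open>simp_all add: universal_MLtest_def\<close>)
  have rd_const: "rd X = rd X0" if X: "X \<in> MLR" for X
  proof -
    obtain Y where "Y \<in> MLR" "\<forall>n. Y \<notin> U n \<longrightarrow> tfun \<Psi> (chi n) = Some (chi (rd X))"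
      using layers[OF X] unfolding rd_def by blast
    then show ?thesis using answer_forced_by_test[of U g, OF W] g by blast
  qed
  obtain X where X: "X \<in> MLR" "X \<in> V (rd X0)" using MLR_meets_universal_level[OF assms] by blast
  then have "X \<notin> V (rd X)" unfolding rd_def by (metis LeastI_ex MLR_iff_universal[OF assms(2)])
  with X rd_const show False by simp
qed

end
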